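(* Let $n\ge2$. The standard brackets, i.e. the brackets $[[x_1,\dots,x_n],y_1,\dots,y_{n-1}]$ with $\{x_i\}\cup\{y_j\}=[2n-1]$, $x_1<\dots<x_n$, $y_1<\dots<y_{n-1}$ and $x_j<y_j$ for all $j\in[n-1]$, form a basis of $\rho_{n,3}$. In particular $\dim\rho_{n,3}$ equals the number of standard Young tableaux of shape $2^{n-1}1$.
   Context: All vector spaces are over $\mathbb C$. A Lie algebra of the $n$-th kind (LAnKe) is a vector space with an $n$-linear antisymmetric bracket satisfying the generalized Jacobi identity $[[x_1,\dots,x_n],y_1,\dots,y_{n-1}]=\sum_{i=1}^n(-1)^{n-i}[[y_1,\dots,y_{n-1},x_i],x_1,\dots,\widehat{x_i},\dots,x_n]$. $\rho_{n,3}$ is the representation of $S_{2n-1}$ on the multilinear component of the free LAnKe on generators $1,\dots,2n-1$ consisting of the span of bracketings with two $n$-brackets in which each generator appears exactly once; every such element can be written as a left comb $[[x_1,\dots,x_n],y_1,\dots,y_{n-1}]$. *)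

theory Defs
  imports Complex_Main "HOL-Library.Function_Algebras"
begin

text \<open>A left comb [[x_1,...,x_n],y_1,...,y_(n-1)] is represented by the pair of lists (xs, ys).\<close>
type_synonym comb = "nat list \<times> nat list"

text \<open>Vectors of the free vector space on combs: finitely supported functions comb => complex.\<close>
type_synonym cvec = "comb \<Rightarrow> complex"

definition sc :: "complex \<Rightarrow> cvec \<Rightarrow> cvec" where
  "sc c f = (\<lambda>x. c * f x)"

definition valid_comb :: "nat \<Rightarrow> comb \<Rightarrow> bool" where
  "valid_comb n c \<longleftrightarrow> length (fst c) = n \<and> length (snd c) = n - 1 \<and>
     distinct (fst c @ snd c) \<and> set (fst c @ snd c) = {1..2*n-1}"

definition ind :: "comb \<Rightarrow> cvec" where
  "ind c = (\<lambda>d. if d = c then 1 else 0)"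

definition swap_pos :: "nat list \<Rightarrow> nat \<Rightarrow> nat \<Rightarrow> nat list" where
  "swap_pos xs i j = xs[i := xs ! j, j := xs ! i]"

definition remove_nth :: "nat \<Rightarrow> nat list \<Rightarrow> nat list" where
  "remove_nth i xs = take i xs @ drop (Suc i) xs"

definition combs_space :: "nat \<Rightarrow> cvec set" where
  "combs_space n = ind ` {c. valid_comb n c}"

text \<open>Defining relations of the free LAnKe in this component:
  antisymmetry of the inner bracket, antisymmetry of the outer bracket
  (among the y's; moving the inner bracket is absorbed by writing everything
  as left combs), and the generalized Jacobi identity.\<close>
definition relations :: "nat \<Rightarrow> cvec set" where
  "relations n =
     {ind (swap_pos xs i j, ys) + ind (xs, ys) | xs ys i j.
        valid_comb n (xs, ys) \<and> i < j \<and> j < n} \<union>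
     {ind (xs, swap_pos ys i j) + ind (xs, ys) | xs ys i j.
        valid_comb n (xs, ys) \<and> i < j \<and> j < n - 1} \<union>
     {ind (xs, ys) - (\<Sum>i<n. sc ((-1) ^ (n - 1 - i)) (ind (ys @ [xs ! i], remove_nth i xs)))
        | xs ys. valid_comb n (xs, ys)}"

definition standard_comb :: "nat \<Rightarrow> comb \<Rightarrow> bool" where
  "standard_comb n c \<longleftrightarrow> valid_comb n c \<and> sorted_wrt (<) (fst c) \<and> sorted_wrt (<) (snd c) \<and>
     (\<forall>j < n - 1. fst c ! j < snd c ! j)"

text \<open>rho_{n,3} is span(combs_space n) / span(relations n); its dimension.\<close>
definition rho_dim :: "nat \<Rightarrow> nat" where
  "rho_dim n = vector_space.dim sc (combs_space n) - vector_space.dim sc (relations n)"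

text \<open>Young diagram of a partition (English notation, rows indexed by r, columns by c)
  and standard Young tableaux.\<close>
definition young_cells :: "nat list \<Rightarrow> (nat \<times> nat) set" where
  "young_cells la = {(r, c). r < length la \<and> c < la ! r}"

definition SYT :: "nat list \<Rightarrow> ((nat \<times> nat) \<Rightarrow> nat) set" where
  "SYT la = {T. bij_betw T (young_cells la) {1..sum_list la} \<and>
     (\<forall>x. x \<notin> young_cells la \<longrightarrow> T x = 0) \<and>
     (\<forall>r c. (r, c) \<in> young_cells la \<and> (r, Suc c) \<in> young_cells la \<longrightarrow> T (r, c) < T (r, Suc c)) \<and>
     (\<forall>r c. (r, c) \<in> young_cells la \<and> (Suc r, c) \<in> young_cells la \<longrightarrow> T (r, c) < T (Suc r, c))}"

end

theory Submission
  imports Defs "HOL-Combinatorics.Permutations"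
begin

text \<open>
  Modulo the antisymmetry relations every comb is, up to sign, the comb with both argument lists
  increasing, which is determined by the set X of inner entries. In these terms the Jacobi identity
  relates X to the sets insert x (ground n - X), x \<in> X. Combining Jacobi identities with
  coefficients inverting a binomial incidence matrix gives the Garnir relations, which rewrite a
  non-standard X through sets that are smaller in the order comparing binary expansions; hence the
  standard brackets span modulo relations.

  For independence, each standard bracket T defines a functional, built from the transversals of
  the rows of T, which vanishes on all relations, is nonzero at T and vanishes at the other standard
  brackets of binary key at most that of T. Applied to the bracket of maximal key in the support of
  a relation among standard brackets, it shows that the relation is trivial. The dimension formula
  follows, and reading off the two columns identifies standard brackets with standard Young
  tableaux of shape 2^(n-1) 1.
\<close>

section \<open>Signs of lists\<close>

fun inversions :: "'a::linorder list \<Rightarrow> nat" where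
  "inversions [] = 0"
| "inversions (a # l) = length (filter (\<lambda>b. b < a) l) + inversions l"

definition list_sign :: "'a::linorder list \<Rightarrow> complex" where
  "list_sign l = (-1) ^ inversions l"

lemma inversions_snoc: "inversions (ys @ [x]) = inversions ys + length (filter (\<lambda>y. x < y) ys)"
  by (induction ys) auto

lemma inversions_remove:
  "inversions (a @ x # b) = inversions (a @ b) + length (filter (\<lambda>u. x < u) a) + length (filter (\<lambda>u. u < x) b)"
  by (induction a) auto

lemma inversions_sorted: "sorted l \<Longrightarrow> inversions l = 0"
  by (induction l) (auto simp: filter_empty_conv)

lemma list_sign_sorted: "sorted l \<Longrightarrow> list_sign l = 1"
  by (simp add: list_sign_def inversions_sorted)

lemma list_sign_square: "list_sign l * list_sign l = 1"
  by (simp add: list_sign_def flip: power_add)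

lemma mset_swap_pos: "i < length l \<Longrightarrow> j < length l \<Longrightarrow> mset (swap_pos l i j) = mset l"
  unfolding swap_pos_def by (simp add: mset_swap)

lemma set_swap_pos: "i < length l \<Longrightarrow> j < length l \<Longrightarrow> set (swap_pos l i j) = set l"
  by (metis mset_swap_pos set_mset_mset)

lemma distinct_swap_pos: "i < length l \<Longrightarrow> j < length l \<Longrightarrow> distinct (swap_pos l i j) = distinct l"
  unfolding swap_pos_def by (simp add: distinct_swap)

lemma sort_swap_pos: "i < length l \<Longrightarrow> j < length l \<Longrightarrow> sort (swap_pos l i j) = sort l"
  by (rule properties_for_sort) (simp_all add: mset_swap_pos)

lemma swap_pos_swap_pos: "i < length l \<Longrightarrow> j < length l \<Longrightarrow> swap_pos (swap_pos l i j) i j = l"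
  unfolding swap_pos_def by (auto simp: list_eq_iff_nth_eq nth_list_update)

lemma swap_pos_Cons: "swap_pos (a # l) (Suc i) (Suc j) = a # swap_pos l i j"
  unfolding swap_pos_def by simp

lemma swap_pos_nth:
  assumes "i < length l" "j < length l" "k < length l"
  shows "swap_pos l i j ! k = l ! (Transposition.transpose i j k)"
  using assms unfolding swap_pos_def by (auto simp: nth_list_update transpose_def)

lemma inversions_swap_descent:
  assumes "Suc i < length l" "l ! i > l ! Suc i"
  shows "Suc (inversions (swap_pos l i (Suc i))) = inversions l"
  using assms
proof (induction l arbitrary: i)
  case Nil then show ?case by simp
next
  case (Cons a l)
  show ?case
  proof (cases i)
    case 0
    then obtain b l' where l: "l = b # l'" using Cons by (cases l) auto
    have "swap_pos (a # l) i (Suc i) = b # a # l'" using 0 l unfolding swap_pos_def by simp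
    then show ?thesis using Cons.prems 0 l by auto
  next
    case (Suc k)
    have "mset (swap_pos l k (Suc k)) = mset l" using Cons.prems Suc by (intro mset_swap_pos) auto
    then have "length (filter (\<lambda>b. b < a) (swap_pos l k (Suc k))) = length (filter (\<lambda>b. b < a) l)"
      by (metis mset_filter size_mset)
    moreover have "Suc (inversions (swap_pos l k (Suc k))) = inversions l" using Cons Suc by auto
    ultimately show ?thesis using Suc by (simp add: swap_pos_Cons)
  qed
qed

lemma not_sorted_imp_descent: "\<not> sorted l \<Longrightarrow> \<exists>i. Suc i < length l \<and> l ! i > l ! Suc i"
  by (auto simp: sorted_iff_nth_Suc not_le)

text \<open>To see that a transposition of two arbitrary positions flips the sign, identify a
  distinct list with the permutation sending each position to the rank of its entry.\<close>

definition rank_perm :: "nat list \<Rightarrow> nat \<Rightarrow> nat" where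
  "rank_perm l i = (if i < length l then card {u \<in> set l. u < l ! i} else i)"

lemma rank_lt: "v \<in> set (l::nat list) \<Longrightarrow> card {u \<in> set l. u < v} < card (set l)"
proof -
  assume v: "v \<in> set l"
  have "v \<notin> {u \<in> set l. u < v}" by simp
  then have "{u \<in> set l. u < v} \<subset> set l" using v by blast
  then show ?thesis by (simp add: psubset_card_mono)
qed

lemma rank_inj:
  assumes "v \<in> set (l::nat list)" "w \<in> set l" "card {u \<in> set l. u < v} = card {u \<in> set l. u < w}"
  shows "v = w"
proof (rule ccontr)
  assume "v \<noteq> w"
  then consider "v < w" | "w < v" by (meson linorder_neqE_nat)
  then show False
  proof cases
    case 1
    have "card {u \<in> set l. u < v} < card {u \<in> set l. u < w}"
      by (rule psubset_card_mono) (use 1 assms in auto)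
    then show False using assms by simp
  next
    case 2
    have "card {u \<in> set l. u < w} < card {u \<in> set l. u < v}"
      by (rule psubset_card_mono) (use 2 assms in auto)
    then show False using assms by simp
  qed
qed

lemma rank_perm_permutes:
  assumes "distinct l"
  shows "rank_perm l permutes {..<length l}"
proof (rule bij_imp_permutes)
  have inj: "inj_on (rank_perm l) {..<length l}"
  proof (rule inj_onI)
    fix i j assume ij: "i \<in> {..<length l}" "j \<in> {..<length l}" "rank_perm l i = rank_perm l j"
    then have "l ! i = l ! j" using rank_inj[of "l!i" l "l!j"] by (auto simp: rank_perm_def)
    then show "i = j" using ij assms by (simp add: nth_eq_iff_index_eq)
  qed
  have sub: "rank_perm l ` {..<length l} \<subseteq> {..<length l}"
  proof
    fix y assume "y \<in> rank_perm l ` {..<length l}"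
    then obtain x where x: "x < length l" "y = rank_perm l x" by auto
    have "card {u \<in> set l. u < l ! x} < card (set l)" using rank_lt[of "l ! x" l] x by simp
    then show "y \<in> {..<length l}" using x assms by (simp add: rank_perm_def distinct_card)
  qed
  show "bij_betw (rank_perm l) {..<length l} {..<length l}"
    using inj endo_inj_surj[OF _ sub inj] by (simp add: bij_betw_def)
  show "\<And>x. x \<notin> {..<length l} \<Longrightarrow> rank_perm l x = x" by (simp add: rank_perm_def)
qed

lemma rank_perm_swap_pos:
  assumes "i < length l" "j < length l"
  shows "rank_perm (swap_pos l i j) = rank_perm l \<circ> Transposition.transpose i j"
proof
  fix k
  have len: "length (swap_pos l i j) = length l" by (simp add: swap_pos_def)
  show "rank_perm (swap_pos l i j) k = (rank_perm l \<circ> Transposition.transpose i j) k"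
  proof (cases "k < length l")
    case True
    then have "Transposition.transpose i j k < length l" using assms by (auto simp: transpose_def)
    then show ?thesis using True assms len
      by (simp add: rank_perm_def swap_pos_nth set_swap_pos)
  next
    case False
    then have "Transposition.transpose i j k = k" using assms by (auto simp: transpose_def)
    then show ?thesis using False len by (simp add: rank_perm_def)
  qed
qed

lemma rank_perm_sorted:
  assumes "sorted l" "distinct l"
  shows "rank_perm l = id"
proof
  fix k
  have ss: "sorted_wrt (<) l" using assms strict_sorted_iff by blast
  have "{u \<in> set l. u < l ! k} = set (take k l)" if k: "k < length l"
  proof -
    have "{u \<in> set l. u < l ! k} = (\<lambda>i. l ! i) ` {i. i < length l \<and> l ! i < l ! k}"
      by (auto simp: in_set_conv_nth)
    also have "{i. i < length l \<and> l ! i < l ! k} = {..<k}"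
    proof (intro set_eqI iffI)
      fix i assume "i \<in> {i. i < length l \<and> l ! i < l ! k}"
      then have "i < length l" "l ! i < l ! k" by auto
      then show "i \<in> {..<k}"
        using sorted_wrt_nth_less[OF ss, of k i] k by (metis lessThan_iff less_asym not_less_iff_gr_or_eq)
    next
      fix i assume "i \<in> {..<k}"
      then show "i \<in> {i. i < length l \<and> l ! i < l ! k}" using sorted_wrt_nth_less[OF ss, of i k] k by auto
    qed
    also have "(\<lambda>i. l ! i) ` {..<k} = set (take k l)"
      using k nth_image[of k l] by (simp add: atLeast0LessThan)
    finally show ?thesis .
  qed
  then show "rank_perm l k = id k" using assms by (simp add: rank_perm_def distinct_card)
qed

lemma sign_rank_perm_swap_pos:
  assumes "distinct l" "i < length l" "j < length l" "i \<noteq> j"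
  shows "sign (rank_perm (swap_pos l i j)) = - sign (rank_perm l)"
  using assms permutes_imp_permutation[OF _ rank_perm_permutes[OF assms(1)]]
  by (simp add: rank_perm_swap_pos sign_compose permutation_swap_id sign_swap_id)

lemma list_sign_eq_sign: "distinct (l::nat list) \<Longrightarrow> list_sign l = of_int (sign (rank_perm l))"
proof (induction "inversions l" arbitrary: l rule: less_induct)
  case less
  show ?case
  proof (cases "sorted l")
    case True
    then show ?thesis using less by (simp add: list_sign_sorted rank_perm_sorted)
  next
    case False
    then obtain i where i: "Suc i < length l" "l ! i > l ! Suc i" using not_sorted_imp_descent by blast
    define l' where "l' = swap_pos l i (Suc i)"
    have inv: "Suc (inversions l') = inversions l" using inversions_swap_descent[OF i] l'_def by simp
    have "distinct l'" using less.prems i unfolding l'_def by (simp add: distinct_swap_pos)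
    then have "list_sign l' = of_int (sign (rank_perm l'))" using less inv by auto
    moreover have "sign (rank_perm l') = - sign (rank_perm l)"
      unfolding l'_def by (rule sign_rank_perm_swap_pos) (use less.prems i in auto)
    ultimately show ?thesis using inv[symmetric] by (simp add: list_sign_def)
  qed
qed

lemma list_sign_swap_pos:
  assumes "distinct l" "i < length l" "j < length l" "i \<noteq> j"
  shows "list_sign (swap_pos l i j) = - list_sign l"
  using assms list_sign_eq_sign[of l] list_sign_eq_sign[of "swap_pos l i j"] sign_rank_perm_swap_pos[OF assms]
  by (simp add: distinct_swap_pos)

section \<open>Normal forms modulo antisymmetry\<close>

interpretation vec: vector_space sc
  by unfold_locales (auto simp: sc_def fun_eq_iff algebra_simps)

abbreviation rel_span :: "nat \<Rightarrow> cvec set" where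
  "rel_span n \<equiv> vec.span (relations n)"

lemma sc_apply [simp]: "sc c f x = c * f x"
  by (simp add: sc_def)

lemma sum_fun_apply: "(\<Sum>i\<in>S. f i) x = (\<Sum>i\<in>S. f i x)"
  by (induction S rule: infinite_finite_induct) auto

lemma sc_sum: "sc c (\<Sum>i\<in>S. f i) = (\<Sum>i\<in>S. sc c (f i))"
  by (simp add: fun_eq_iff sum_fun_apply sum_distrib_left)

lemma sc_diff: "sc c (a - b) = sc c a - sc c b"
  by (simp add: fun_eq_iff algebra_simps)

lemma sum_const_sc: "finite A \<Longrightarrow> (\<Sum>x\<in>A. v) = sc (of_nat (card A)) v"
  by (induction A rule: finite_induct) (auto simp: fun_eq_iff algebra_simps)

lemma sc_sc_involution: "a * a = 1 \<Longrightarrow> sc a (sc a v) = v"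
  by (simp add: fun_eq_iff mult.assoc[symmetric])

lemma minus_one_power_eq_if_even: "even (a + b) \<Longrightarrow> (-1::complex) ^ a = (-1) ^ b"
  by (metis minus_one_power_iff even_add)

lemma minus_one_power_square: "((-1::complex) ^ k) * ((-1) ^ k) = 1"
  by (simp flip: power_add)

lemma sort_mod_span:
  assumes "P l"
    and closed: "\<And>l i. P l \<Longrightarrow> Suc i < length l \<Longrightarrow> P (swap_pos l i (Suc i))"
    and antisym: "\<And>l i. P l \<Longrightarrow> Suc i < length l \<Longrightarrow> f (swap_pos l i (Suc i)) + f l \<in> vec.span R"
  shows "f l - sc (list_sign l) (f (sort l)) \<in> vec.span R"
  using \<open>P l\<close>
proof (induction "inversions l" arbitrary: l rule: less_induct)
  case less
  show ?case
  proof (cases "sorted l")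
    case True
    then show ?thesis by (simp add: list_sign_sorted sorted_sort_id fun_eq_iff vec.span_zero)
  next
    case False
    then obtain i where i: "Suc i < length l" "l ! i > l ! Suc i" using not_sorted_imp_descent by blast
    define l' where "l' = swap_pos l i (Suc i)"
    have inv: "Suc (inversions l') = inversions l" using inversions_swap_descent[OF i] l'_def by simp
    have "P l'" unfolding l'_def using closed less.prems i by blast
    then have IH: "f l' - sc (list_sign l') (f (sort l')) \<in> vec.span R" using less inv by auto
    have "swap_pos l' i (Suc i) = l" unfolding l'_def using i by (simp add: swap_pos_swap_pos)
    moreover have "Suc i < length l'" unfolding l'_def swap_pos_def using i by simp
    ultimately have "f l + f l' \<in> vec.span R" using antisym[OF \<open>P l'\<close>, of i] by simp
    from vec.span_diff[OF this IH]
    have "(f l + f l') - (f l' - sc (list_sign l') (f (sort l'))) \<in> vec.span R" .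
    moreover have "list_sign l' = - list_sign l"
      unfolding list_sign_def inv[symmetric] by simp
    moreover have "sort l' = sort l"
      unfolding l'_def using i by (simp add: sort_swap_pos)
    ultimately show ?thesis by (simp add: fun_eq_iff)
  qed
qed

definition subsets_of_card :: "'a set \<Rightarrow> nat \<Rightarrow> 'a set set" where
  "subsets_of_card V m = {W. W \<subseteq> V \<and> card W = m}"

lemma finite_subsets_of_card[simp]: "finite V \<Longrightarrow> finite (subsets_of_card V m)"
proof -
  assume f: "finite V"
  have "subsets_of_card V m \<subseteq> Pow V" unfolding subsets_of_card_def by auto
  then show ?thesis using f by (metis finite_Pow_iff finite_subset)
qed

lemma sum_subsets_remove_point:
  assumes fV: "finite V" and m: "m \<ge> 1"
  shows "(\<Sum>W\<in>subsets_of_card V m. \<Sum>u\<in>W. f (W - {u}) u) = (\<Sum>Z\<in>subsets_of_card V (m - 1). \<Sum>u\<in>V - Z. f Z u)"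
proof -
  have finW: "\<And>W. W \<in> subsets_of_card V m \<Longrightarrow> finite W" unfolding subsets_of_card_def using fV finite_subset by blast
  define h :: "'a set \<times> 'a \<Rightarrow> 'a set \<times> 'a" where "h = (\<lambda>(W, u). (W - {u}, u))"
  have bij: "bij_betw h (SIGMA W:subsets_of_card V m. W) (SIGMA Z:subsets_of_card V (m - 1). V - Z)"
  proof (rule bij_betwI[where g = "\<lambda>(Z, u). (insert u Z, u)"])
    show "h \<in> (SIGMA W:subsets_of_card V m. W) \<rightarrow> (SIGMA Z:subsets_of_card V (m - 1). V - Z)"
    proof
      fix p assume "p \<in> (SIGMA W:subsets_of_card V m. W)"
      then obtain W u where p: "p = (W, u)" "W \<in> subsets_of_card V m" "u \<in> W" by auto
      then have "W - {u} \<in> subsets_of_card V (m - 1)" using finW[of W] by (auto simp: subsets_of_card_def)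
      then show "h p \<in> (SIGMA Z:subsets_of_card V (m - 1). V - Z)" using p by (auto simp: h_def subsets_of_card_def)
    qed
    show "(\<lambda>(Z, u). (insert u Z, u)) \<in> (SIGMA Z:subsets_of_card V (m - 1). V - Z) \<rightarrow> (SIGMA W:subsets_of_card V m. W)"
    proof
      fix p assume "p \<in> (SIGMA Z:subsets_of_card V (m - 1). V - Z)"
      then obtain Z u where p: "p = (Z, u)" "Z \<in> subsets_of_card V (m - 1)" "u \<in> V - Z" by auto
      have fZ: "finite Z" using p fV finite_subset by (auto simp: subsets_of_card_def)
      then have "insert u Z \<in> subsets_of_card V m" using p m by (auto simp: subsets_of_card_def)
      then show "(\<lambda>(Z, u). (insert u Z, u)) p \<in> (SIGMA W:subsets_of_card V m. W)" using p by auto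
    qed
    show "\<And>p. p \<in> (SIGMA W:subsets_of_card V m. W) \<Longrightarrow> (\<lambda>(Z, u). (insert u Z, u)) (h p) = p"
      by (auto simp: h_def)
    show "\<And>p. p \<in> (SIGMA Z:subsets_of_card V (m - 1). V - Z) \<Longrightarrow> h ((\<lambda>(Z, u). (insert u Z, u)) p) = p"
      by (auto simp: h_def)
  qed
  define g where "g = (\<lambda>(Z, u). f Z u)"
  have "(\<Sum>W\<in>subsets_of_card V m. \<Sum>u\<in>W. f (W - {u}) u) = (\<Sum>W\<in>subsets_of_card V m. \<Sum>u\<in>W. (g \<circ> h) (W, u))"
    by (simp add: g_def h_def)
  also have "\<dots> = sum (g \<circ> h) (SIGMA W:subsets_of_card V m. W)"
    using sum.Sigma[of "subsets_of_card V m" "\<lambda>W. W" "\<lambda>W u. (g \<circ> h) (W, u)"] fV finW by simp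
  also have "\<dots> = sum g (SIGMA Z:subsets_of_card V (m - 1). V - Z)"
    using sum.reindex_bij_betw[OF bij, of g] by simp
  also have "\<dots> = (\<Sum>Z\<in>subsets_of_card V (m - 1). \<Sum>u\<in>V - Z. g (Z, u))"
    using sum.Sigma[of "subsets_of_card V (m - 1)" "\<lambda>Z. V - Z" "\<lambda>Z u. g (Z, u)"] fV by simp
  finally show ?thesis by (simp add: g_def)
qed

definition ground :: "nat \<Rightarrow> nat set" where
  "ground n = {1..2*n-1}"

lemma finite_ground [simp]: "finite (ground n)"
  by (simp add: ground_def)

lemma card_ground: "card (ground n) = 2 * n - 1"
  by (simp add: ground_def)

lemma sum_ground: "\<Sum>(ground n) = n * (2 * n - 1)"
proof (cases n)
  case (Suc k)
  have "\<Sum>(ground n) = ((2*n-1) * (2*n-1+1) - 1 * (1 - 1)) div 2" unfolding ground_def by (rule Sum_Icc_nat)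
  also have "\<dots> = ((2*k+1) * (2*k+2)) div 2" using Suc by simp
  also have "\<dots> = (2*k+1) * (k+1)" by (simp add: algebra_simps)
  finally show ?thesis using Suc by simp
qed (simp add: ground_def)

definition normal_comb :: "nat \<Rightarrow> nat set \<Rightarrow> cvec" where
  "normal_comb n X = ind (sorted_list_of_set X, sorted_list_of_set (ground n - X))"

lemma valid_comb_swap_fst:
  assumes "valid_comb n (xs, ys)" "i < length xs" "j < length xs"
  shows "valid_comb n (swap_pos xs i j, ys)"
  using assms unfolding valid_comb_def
  by (auto simp: swap_pos_def distinct_swap set_swap_pos[unfolded swap_pos_def])

lemma valid_comb_swap_snd:
  assumes "valid_comb n (xs, ys)" "i < length ys" "j < length ys"
  shows "valid_comb n (xs, swap_pos ys i j)"
  using assms unfolding valid_comb_def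
  by (auto simp: swap_pos_def distinct_swap set_swap_pos[unfolded swap_pos_def])

lemma valid_comb_sort_fst: "valid_comb n (xs, ys) \<Longrightarrow> valid_comb n (sort xs, ys)"
  unfolding valid_comb_def by auto

lemma valid_comb_set_snd: "valid_comb n (xs, ys) \<Longrightarrow> set ys = ground n - set xs"
  unfolding valid_comb_def ground_def by auto

lemma swap_fst_relation:
  "valid_comb n (xs, ys) \<Longrightarrow> i < j \<Longrightarrow> j < n \<Longrightarrow> ind (swap_pos xs i j, ys) + ind (xs, ys) \<in> relations n"
  unfolding relations_def by blast

lemma swap_snd_relation:
  "valid_comb n (xs, ys) \<Longrightarrow> i < j \<Longrightarrow> j < n - 1 \<Longrightarrow> ind (xs, swap_pos ys i j) + ind (xs, ys) \<in> relations n"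
  unfolding relations_def by blast

lemma sort_fst_mod_relations:
  assumes "valid_comb n (xs, ys)"
  shows "ind (xs, ys) - sc (list_sign xs) (ind (sort xs, ys)) \<in> rel_span n"
proof (rule sort_mod_span[where P = "\<lambda>xs. valid_comb n (xs, ys)" and f = "\<lambda>xs. ind (xs, ys)"])
  fix l i assume l: "valid_comb n (l, ys)" "Suc i < length l"
  then show "valid_comb n (swap_pos l i (Suc i), ys)" by (intro valid_comb_swap_fst) auto
  have "length l = n" using l by (simp add: valid_comb_def)
  then show "ind (swap_pos l i (Suc i), ys) + ind (l, ys) \<in> rel_span n"
    using l by (intro vec.span_base swap_fst_relation) auto
qed (rule assms)

lemma sort_snd_mod_relations:
  assumes "valid_comb n (xs, ys)"
  shows "ind (xs, ys) - sc (list_sign ys) (ind (xs, sort ys)) \<in> rel_span n"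
proof (rule sort_mod_span[where P = "\<lambda>ys. valid_comb n (xs, ys)" and f = "\<lambda>ys. ind (xs, ys)"])
  fix l i assume l: "valid_comb n (xs, l)" "Suc i < length l"
  then show "valid_comb n (xs, swap_pos l i (Suc i))" by (intro valid_comb_swap_snd) auto
  have "length l = n - 1" using l by (simp add: valid_comb_def)
  then show "ind (xs, swap_pos l i (Suc i)) + ind (xs, l) \<in> rel_span n"
    using l by (intro vec.span_base swap_snd_relation) auto
qed (rule assms)

lemma sort_eq_sorted_list_of_set: "distinct xs \<Longrightarrow> sort xs = sorted_list_of_set (set xs)"
  by (simp add: sorted_list_of_set_sort_remdups distinct_remdups_id)

lemma comb_eq_normal_comb_mod_relations:
  assumes "valid_comb n (xs, ys)"
  shows "ind (xs, ys) - sc (list_sign xs * list_sign ys) (normal_comb n (set xs)) \<in> rel_span n"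
proof -
  have "distinct xs" "distinct ys" using assms by (auto simp: valid_comb_def)
  then have normal: "normal_comb n (set xs) = ind (sort xs, sort ys)"
    unfolding normal_comb_def using valid_comb_set_snd[OF assms] by (simp add: sort_eq_sorted_list_of_set)
  have "ind (xs, ys) - sc (list_sign xs * list_sign ys) (ind (sort xs, sort ys)) =
     (ind (xs, ys) - sc (list_sign xs) (ind (sort xs, ys)))
     + sc (list_sign xs) (ind (sort xs, ys) - sc (list_sign ys) (ind (sort xs, sort ys)))"
    by (simp add: fun_eq_iff algebra_simps)
  then show ?thesis unfolding normal
    by (metis vec.span_add vec.span_scale sort_fst_mod_relations[OF assms]
        sort_snd_mod_relations[OF valid_comb_sort_fst[OF assms]])
qed

section \<open>Jacobi and Garnir relations\<close>

lemma remove_nth_decomp: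
  assumes "i < length xs"
  shows "xs = take i xs @ xs ! i # drop (Suc i) xs" "remove_nth i xs = take i xs @ drop (Suc i) xs"
  using assms by (simp_all add: id_take_nth_drop remove_nth_def)

lemma valid_comb_jacobi_term:
  assumes v: "valid_comb n (xs, ys)" and i: "i < n" and n: "n \<ge> 1"
  shows "valid_comb n (ys @ [xs ! i], remove_nth i xs)"
proof -
  have len: "length xs = n" "length ys = n - 1" using v by (auto simp: valid_comb_def)
  have dec: "xs = take i xs @ xs ! i # drop (Suc i) xs" "remove_nth i xs = take i xs @ drop (Suc i) xs"
    using remove_nth_decomp i len by auto
  have m: "mset ((ys @ [xs ! i]) @ remove_nth i xs) = mset (xs @ ys)"
    by (subst (3) dec(1)) (simp add: dec(2))
  have "distinct ((ys @ [xs ! i]) @ remove_nth i xs)"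
    using v m by (metis valid_comb_def fst_conv snd_conv mset_eq_imp_distinct_iff)
  moreover have "set ((ys @ [xs ! i]) @ remove_nth i xs) = set (xs @ ys)"
    using m by (metis set_mset_mset)
  moreover have "length (remove_nth i xs) = n - 1" using len i by (simp add: remove_nth_def)
  ultimately show ?thesis using v len n by (simp add: valid_comb_def)
qed

lemma jacobi_term_sign:
  assumes v: "valid_comb n (xs, ys)" and i: "i < n" and n: "n \<ge> 1"
  shows "(-1) ^ (n - 1 - i) * (list_sign (ys @ [xs ! i]) * list_sign (remove_nth i xs)) =
         list_sign xs * list_sign ys * (-1) ^ Suc (xs ! i)"
proof -
  have len: "length xs = n" "length ys = n - 1" using v by (auto simp: valid_comb_def)
  define x where "x = xs ! i"
  define a where "a = take i xs"
  define b where "b = drop (Suc i) xs"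
  have dec: "xs = a @ x # b" "remove_nth i xs = a @ b"
    using remove_nth_decomp i len unfolding a_def b_def x_def by auto
  have dall: "distinct (xs @ ys)" using v by (simp add: valid_comb_def)
  have sall: "set (xs @ ys) = {1..2*n-1}" using v by (simp add: valid_comb_def)
  have lb: "length b = n - 1 - i" using len i unfolding b_def by simp
  have xb: "x \<notin> set b" using dall dec(1) by auto
  have db: "distinct b" using dall dec(1) by auto
  have split_b: "length b = length (filter (\<lambda>u. u < x) b) + length (filter (\<lambda>u. x < u) b)"
  proof -
    have "length b = length (filter (\<lambda>u. u < x) b) + length (filter (\<lambda>u. \<not> u < x) b)"
      by (simp add: sum_length_filter_compl)
    also have "filter (\<lambda>u. \<not> u < x) b = filter (\<lambda>u. x < u) b"
      using xb by (intro filter_cong) (auto, metis antisym_conv3)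
    finally show ?thesis .
  qed
  have cnt: "length (filter (\<lambda>u. x < u) (a @ b @ ys)) = 2*n - 1 - x"
  proof -
    have d: "distinct (a @ b @ ys)" using dall dec(1) by auto
    have st: "set (a @ b @ ys) = {1..2*n-1} - {x}" using sall dall dec(1) by auto
    have "{u. x < u} \<inter> ({1..2*n-1} - {x}) = {Suc x..2*n-1}" by auto
    then show ?thesis using distinct_length_filter[OF d] st by simp
  qed
  have xle: "x \<le> 2*n-1" using sall dec(1) by (metis in_set_conv_decomp atLeastAtMost_iff Un_iff set_append)
  have i1: "inversions xs = inversions (a @ b) + length (filter (\<lambda>u. x < u) a) + length (filter (\<lambda>u. u < x) b)"
    by (subst dec(1)) (rule inversions_remove)
  have i2: "inversions (ys @ [x]) = inversions ys + length (filter (\<lambda>y. x < y) ys)" by (rule inversions_snoc)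
  have "(-1::complex) ^ (n - 1 - i + (inversions (ys @ [x]) + inversions (remove_nth i xs))) =
        (-1) ^ (inversions xs + inversions ys + Suc x)"
  proof (rule minus_one_power_eq_if_even)
    have "n - 1 - i + (inversions (ys @ [x]) + inversions (remove_nth i xs)) + (inversions xs + inversions ys + Suc x)
      = 2 * (inversions (a @ b) + inversions ys + length (filter (\<lambda>u. u < x) b)) +
        (length (filter (\<lambda>u. x < u) (a @ b @ ys)) + Suc x)"
      using i1 i2 dec(2) lb split_b by simp
    also have "length (filter (\<lambda>u. x < u) (a @ b @ ys)) + Suc x = 2 * n" using cnt xle n by simp
    finally have eq: "n - 1 - i + (inversions (ys @ [x]) + inversions (remove_nth i xs)) + (inversions xs + inversions ys + Suc x)
      = 2 * (inversions (a @ b) + inversions ys + length (filter (\<lambda>u. u < x) b)) + 2 * n" .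
    show "even (n - 1 - i + (inversions (ys @ [x]) + inversions (remove_nth i xs)) + (inversions xs + inversions ys + Suc x))"
      by (subst eq) simp
  qed
  then show ?thesis unfolding x_def list_sign_def by (simp add: power_add)
qed

lemma sum_nth_eq_sum_set:
  assumes "distinct xs"
  shows "(\<Sum>i<length xs. g (xs ! i)) = (\<Sum>x\<in>set xs. g x)"
proof -
  have "(\<Sum>x\<in>set xs. g x) = sum_list (map g xs)" using assms by (rule sum.distinct_set_conv_list)
  also have "\<dots> = (\<Sum>i<length xs. g (xs ! i))" by (simp add: sum_list_sum_nth atLeast0LessThan)
  finally show ?thesis by simp
qed

lemma jacobi_relation: "valid_comb n (xs, ys) \<Longrightarrow>
   ind (xs, ys) - (\<Sum>i<n. sc ((-1) ^ (n - 1 - i)) (ind (ys @ [xs ! i], remove_nth i xs))) \<in> relations n"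
  unfolding relations_def by blast

lemma jacobi_normal_comb_of_valid:
  assumes v: "valid_comb n (xs, ys)" and n: "n \<ge> 1"
  shows "normal_comb n (set xs) - (\<Sum>x\<in>set xs. sc ((-1) ^ Suc x) (normal_comb n (insert x (ground n - set xs)))) \<in> rel_span n"
proof -
  define S where "S = list_sign xs * list_sign ys"
  define T where "T i = ind (ys @ [xs ! i], remove_nth i xs)" for i
  define c where "c i = ((-1::complex) ^ (n - 1 - i))" for i
  define s where "s i = list_sign (ys @ [xs ! i]) * list_sign (remove_nth i xs)" for i
  define G where "G i = normal_comb n (insert (xs ! i) (ground n - set xs))" for i
  have len: "length xs = n" using v by (simp add: valid_comb_def)
  have d: "distinct xs" using v by (simp add: valid_comb_def)
  have r1: "ind (xs, ys) - (\<Sum>i<n. sc (c i) (T i)) \<in> rel_span n"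
    unfolding T_def c_def by (rule vec.span_base, rule jacobi_relation[OF v])
  have r2: "ind (xs, ys) - sc S (normal_comb n (set xs)) \<in> rel_span n" unfolding S_def by (rule comb_eq_normal_comb_mod_relations[OF v])
  have r3: "T i - sc (s i) (G i) \<in> rel_span n" if "i < n" for i
  proof -
    have vt: "valid_comb n (ys @ [xs ! i], remove_nth i xs)" by (rule valid_comb_jacobi_term[OF v that n])
    have "set (ys @ [xs ! i]) = insert (xs ! i) (ground n - set xs)" using valid_comb_set_snd[OF v] by simp
    then show ?thesis using comb_eq_normal_comb_mod_relations[OF vt] unfolding T_def s_def G_def by simp
  qed
  have r4: "(\<Sum>i<n. sc (c i) (T i - sc (s i) (G i))) \<in> rel_span n"
    by (rule vec.span_sum, rule vec.span_scale, rule r3) simp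
  have cs: "c i * s i = S * (-1) ^ Suc (xs ! i)" if "i < n" for i
    unfolding c_def s_def S_def using jacobi_term_sign[OF v that n] by simp
  have e1: "(\<Sum>i<n. sc (c i) (T i - sc (s i) (G i))) =
     (\<Sum>i<n. sc (c i) (T i)) - (\<Sum>i<n. sc S (sc ((-1) ^ Suc (xs ! i)) (G i)))"
  proof -
    have "(\<Sum>i<n. sc (c i) (T i - sc (s i) (G i))) = (\<Sum>i<n. sc (c i) (T i) - sc S (sc ((-1) ^ Suc (xs ! i)) (G i)))"
    proof (rule sum.cong)
      fix i assume "i \<in> {..<n}"
      then have "c i * s i = S * (-1) ^ Suc (xs ! i)" using cs by simp
      then show "sc (c i) (T i - sc (s i) (G i)) = sc (c i) (T i) - sc S (sc ((-1) ^ Suc (xs ! i)) (G i))"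
        by (simp add: fun_eq_iff sc_def right_diff_distrib mult.assoc[symmetric])
    qed simp
    also have "\<dots> = (\<Sum>i<n. sc (c i) (T i)) - (\<Sum>i<n. sc S (sc ((-1) ^ Suc (xs ! i)) (G i)))"
      by (rule sum_subtractf)
    finally show ?thesis .
  qed
  have comb: "(\<Sum>i<n. sc (c i) (T i - sc (s i) (G i))) + (ind (xs, ys) - (\<Sum>i<n. sc (c i) (T i)))
      - (ind (xs, ys) - sc S (normal_comb n (set xs)))
      = sc S (normal_comb n (set xs) - (\<Sum>i<n. sc ((-1) ^ Suc (xs ! i)) (G i)))"
    unfolding e1 by (simp add: fun_eq_iff sum_fun_apply algebra_simps sum_distrib_left)
  have "sc S (normal_comb n (set xs) - (\<Sum>i<n. sc ((-1) ^ Suc (xs ! i)) (G i))) \<in> rel_span n"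
    by (subst comb[symmetric]) (rule vec.span_diff[OF vec.span_add[OF r4 r1] r2])
  then have "sc S (sc S (normal_comb n (set xs) - (\<Sum>i<n. sc ((-1) ^ Suc (xs ! i)) (G i)))) \<in> rel_span n"
    by (rule vec.span_scale)
  moreover have "S * S = 1" unfolding S_def
    by (metis mult.assoc mult.commute list_sign_square mult_1_right)
  ultimately have "normal_comb n (set xs) - (\<Sum>i<n. sc ((-1) ^ Suc (xs ! i)) (G i)) \<in> rel_span n"
    by (simp only: sc_sc_involution)
  moreover have "(\<Sum>i<n. sc ((-1) ^ Suc (xs ! i)) (G i)) =
       (\<Sum>x\<in>set xs. sc ((-1) ^ Suc x) (normal_comb n (insert x (ground n - set xs))))"
    unfolding G_def using sum_nth_eq_sum_set[OF d, of "\<lambda>x. sc ((-1) ^ Suc x) (normal_comb n (insert x (ground n - set xs)))"] len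
    by simp
  ultimately show ?thesis by simp
qed

lemma valid_comb_normal:
  assumes "X \<subseteq> ground n" "card X = n" "n \<ge> 1"
  shows "valid_comb n (sorted_list_of_set X, sorted_list_of_set (ground n - X))"
proof -
  have fX: "finite X" using finite_subset[OF assms(1)] by simp
  have c: "card (ground n - X) = n - 1" using assms card_ground[of n] by (simp add: card_Diff_subset fX)
  have s1: "set (sorted_list_of_set X) = X" "distinct (sorted_list_of_set X)" "length (sorted_list_of_set X) = n" using fX assms by auto
  have s2: "set (sorted_list_of_set (ground n - X)) = ground n - X" "distinct (sorted_list_of_set (ground n - X))" "length (sorted_list_of_set (ground n - X)) = n - 1"
    using finite_ground[of n] c by auto
  have u: "X \<union> (ground n - X) = {1..2*n-1}" using assms(1) unfolding ground_def by blast
  have "distinct (sorted_list_of_set X @ sorted_list_of_set (ground n - X))" using s1 s2 by (simp add: distinct_append)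
  then show ?thesis unfolding valid_comb_def using s1 s2 u by simp
qed

abbreviation ksubsets :: "nat \<Rightarrow> nat \<Rightarrow> nat set set" where
  "ksubsets n k \<equiv> subsets_of_card (ground n) k"

lemma jacobi_normal_comb:
  assumes "X \<in> ksubsets n n" "n \<ge> 1"
  shows "normal_comb n X - (\<Sum>x\<in>X. sc ((-1) ^ Suc x) (normal_comb n (insert x (ground n - X)))) \<in> rel_span n"
proof -
  have fX: "finite X" using assms finite_subset[of X "ground n"] by (auto simp: subsets_of_card_def)
  have v: "valid_comb n (sorted_list_of_set X, sorted_list_of_set (ground n - X))" using valid_comb_normal assms by (auto simp: subsets_of_card_def)
  show ?thesis using jacobi_normal_comb_of_valid[OF v assms(2)] fX by simp
qed

text \<open>With the sign (-1) ^ (\<Sum>X) the Jacobi identity on normal combs has coefficients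
  independent of X; see jacobi_elt.\<close>

definition signed_comb :: "nat \<Rightarrow> nat set \<Rightarrow> cvec" where
  "signed_comb n X = sc ((-1) ^ (\<Sum>X)) (normal_comb n X)"

definition jacobi_sign :: "nat \<Rightarrow> complex" where
  "jacobi_sign n = (-1) ^ Suc (\<Sum>(ground n))"

lemma jacobi_sign_square: "jacobi_sign n * jacobi_sign n = 1"
  by (simp add: jacobi_sign_def flip: power_add)

lemma jacobi_sign_coeff:
  assumes XA: "X \<subseteq> ground n" and x: "x \<in> X"
  shows "(-1::complex) ^ (\<Sum>X) * (-1) ^ Suc x = jacobi_sign n * (-1) ^ (\<Sum>(insert x (ground n - X)))"
proof -
  have xn: "x \<notin> ground n - X" using x by auto
  have s1: "\<Sum>(insert x (ground n - X)) = x + \<Sum>(ground n - X)" using xn by simp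
  have s2: "\<Sum>X + \<Sum>(ground n - X) = \<Sum>(ground n)"
    using sum.subset_diff[OF XA finite_ground, of "\<lambda>x. x"] by simp
  have "(-1::complex) ^ (\<Sum>X + Suc x) = (-1) ^ (Suc (\<Sum>(ground n)) + \<Sum>(insert x (ground n - X)))"
  proof (rule minus_one_power_eq_if_even)
    have eq: "\<Sum>X + Suc x + (Suc (\<Sum>(ground n)) + \<Sum>(insert x (ground n - X))) = 2 * (\<Sum>(ground n) + x + 1)"
      by (simp add: s1 s2[symmetric])
    show "even (\<Sum>X + Suc x + (Suc (\<Sum>(ground n)) + \<Sum>(insert x (ground n - X))))" by (subst eq) simp
  qed
  then show ?thesis unfolding jacobi_sign_def by (simp only: power_add)
qed

lemma jacobi_sign_eq: "n \<ge> 1 \<Longrightarrow> jacobi_sign n = (-1) ^ (n - 1)"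
proof -
  assume n: "n \<ge> 1"
  have "(-1::complex) ^ Suc (\<Sum>(ground n)) = (-1) ^ (n - 1)"
  proof (rule minus_one_power_eq_if_even)
    obtain k where k: "n = Suc k" using n by (cases n) auto
    have "Suc (\<Sum>(ground n)) + (n - 1) = 2 * (k * k + 2 * k + 1) - 0 + 0"
      unfolding sum_ground k by (simp add: algebra_simps)
    then show "even (Suc (\<Sum>(ground n)) + (n - 1))" by (metis add_0_right diff_zero even_mult_iff even_numeral)
  qed
  then show ?thesis by (simp add: jacobi_sign_def)
qed

definition jacobi_elt :: "nat \<Rightarrow> nat set \<Rightarrow> cvec" where
  "jacobi_elt n X = signed_comb n X - sc (jacobi_sign n) (\<Sum>x\<in>X. signed_comb n (insert x (ground n - X)))"

lemma jacobi_elt_in_rel_span: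
  assumes X: "X \<in> ksubsets n n" and n: "n \<ge> 1"
  shows "jacobi_elt n X \<in> rel_span n"
proof -
  have XA: "X \<subseteq> ground n" using X by (simp add: subsets_of_card_def)
  define e where "e = ((-1::complex) ^ (\<Sum>X))"
  have coef: "e * (-1) ^ Suc x = jacobi_sign n * (-1) ^ (\<Sum>(insert x (ground n - X)))" if "x \<in> X" for x
    unfolding e_def by (rule jacobi_sign_coeff[OF XA that])
  have J: "normal_comb n X - (\<Sum>x\<in>X. sc ((-1) ^ Suc x) (normal_comb n (insert x (ground n - X)))) \<in> rel_span n"
    by (rule jacobi_normal_comb[OF X n])
  have "sc e (normal_comb n X - (\<Sum>x\<in>X. sc ((-1) ^ Suc x) (normal_comb n (insert x (ground n - X))))) = jacobi_elt n X"
  proof -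
    have "sc e (\<Sum>x\<in>X. sc ((-1) ^ Suc x) (normal_comb n (insert x (ground n - X)))) =
          (\<Sum>x\<in>X. sc (e * (-1) ^ Suc x) (normal_comb n (insert x (ground n - X))))"
      by (simp add: fun_eq_iff sum_fun_apply sum_distrib_left mult.assoc)
    also have "\<dots> = (\<Sum>x\<in>X. sc (jacobi_sign n) (signed_comb n (insert x (ground n - X))))"
      by (rule sum.cong) (simp_all only: coef signed_comb_def sc_def mult.assoc)
    also have "\<dots> = sc (jacobi_sign n) (\<Sum>x\<in>X. signed_comb n (insert x (ground n - X)))"
      by (simp add: fun_eq_iff sum_fun_apply sum_distrib_left)
    finally show ?thesis unfolding jacobi_elt_def signed_comb_def e_def
      by (simp add: fun_eq_iff right_diff_distrib)
  qed
  then show ?thesis using vec.span_scale[OF J, of e] by simp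
qed

definition deletion_sum :: "nat \<Rightarrow> nat set \<Rightarrow> cvec" where
  "deletion_sum n T = (\<Sum>v\<in>T. signed_comb n (T - {v}))"

definition deletion_sum_ext :: "nat \<Rightarrow> nat set \<Rightarrow> cvec" where
  "deletion_sum_ext n W = (\<Sum>w\<in>ground n - W. deletion_sum n (insert w W))"

lemma ksubsets_card: "X \<in> ksubsets n k \<Longrightarrow> card X = k" by (simp add: subsets_of_card_def)
lemma ksubsets_subset: "X \<in> ksubsets n k \<Longrightarrow> X \<subseteq> ground n" by (simp add: subsets_of_card_def)
lemma ksubsets_finite: "X \<in> ksubsets n k \<Longrightarrow> finite X" using finite_subset[OF ksubsets_subset] by simp

lemma card_ground_diff: "X \<in> ksubsets n n \<Longrightarrow> card (ground n - X) = n - 1"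
  using card_Diff_subset[OF ksubsets_finite ksubsets_subset, of X n n] by (simp add: card_ground ksubsets_card)

lemma deletion_sum_ext_in_rel_span:
  assumes W: "W \<in> ksubsets n n" and n: "n \<ge> 1"
  shows "deletion_sum_ext n W \<in> rel_span n"
proof -
  have WA: "W \<subseteq> ground n" and fW: "finite W" and cW: "card W = n"
    using W by (auto simp: ksubsets_subset ksubsets_finite ksubsets_card)
  have cC: "card (ground n - W) = n - 1" by (rule card_ground_diff[OF W])
  define Q where "Q x = (\<Sum>z\<in>ground n - W. signed_comb n (insert z (W - {x})))" for x
  define Z where "Z x = insert x (ground n - W)" for x
  have ZS: "Z x \<in> ksubsets n n" if "x \<in> W" for x
  proof -
    have "x \<notin> ground n - W" using that by auto
    then have "card (Z x) = n" unfolding Z_def using cC n by (simp add: card_insert_if)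
    then show ?thesis unfolding Z_def subsets_of_card_def using that WA by auto
  qed
  have JEZ: "jacobi_elt n (Z x) = signed_comb n (Z x) - sc (jacobi_sign n) (signed_comb n W + Q x)" if "x \<in> W" for x
  proof -
    have c: "ground n - Z x = W - {x}" unfolding Z_def using that WA by auto
    have xn: "x \<notin> ground n - W" using that by auto
    have "(\<Sum>z\<in>Z x. signed_comb n (insert z (W - {x}))) = signed_comb n (insert x (W - {x})) + Q x"
      unfolding Z_def Q_def using xn by (simp add: sum.insert)
    moreover have "insert x (W - {x}) = W" using that by auto
    ultimately show ?thesis unfolding jacobi_elt_def c by simp
  qed
  have DUe: "deletion_sum_ext n W = sc (of_nat (n - 1)) (signed_comb n W) + (\<Sum>x\<in>W. Q x)"
  proof -
    have "deletion_sum n (insert w W) = signed_comb n W + (\<Sum>v\<in>W. signed_comb n (insert w (W - {v})))" if "w \<in> ground n - W" for w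
    proof -
      have wn: "w \<notin> W" using that by auto
      have "deletion_sum n (insert w W) = signed_comb n (insert w W - {w}) + (\<Sum>v\<in>W. signed_comb n (insert w W - {v}))"
        unfolding deletion_sum_def using wn fW by (simp add: sum.insert)
      moreover have "insert w W - {w} = W" using wn by auto
      moreover have "(\<Sum>v\<in>W. signed_comb n (insert w W - {v})) = (\<Sum>v\<in>W. signed_comb n (insert w (W - {v})))"
        by (rule sum.cong) (use wn in \<open>auto simp: insert_Diff_if\<close>)
      ultimately show ?thesis by simp
    qed
    then have "deletion_sum_ext n W = (\<Sum>w\<in>ground n - W. signed_comb n W + (\<Sum>v\<in>W. signed_comb n (insert w (W - {v}))))"
      unfolding deletion_sum_ext_def by (rule sum.cong[OF refl])
    also have "\<dots> = (\<Sum>w\<in>ground n - W. signed_comb n W) + (\<Sum>w\<in>ground n - W. \<Sum>v\<in>W. signed_comb n (insert w (W - {v})))"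
      by (rule sum.distrib)
    also have "(\<Sum>w\<in>ground n - W. \<Sum>v\<in>W. signed_comb n (insert w (W - {v}))) = (\<Sum>x\<in>W. Q x)"
      unfolding Q_def by (rule sum.swap)
    finally have "deletion_sum_ext n W = (\<Sum>w\<in>ground n - W. signed_comb n W) + (\<Sum>x\<in>W. Q x)" .
    moreover have fc: "finite (ground n - W)" by simp
    ultimately show ?thesis by (simp only: sum_const_sc[OF fc] cC)
  qed
  have main: "deletion_sum_ext n W = - (jacobi_elt n W + sc (jacobi_sign n) (\<Sum>x\<in>W. jacobi_elt n (Z x)))"
  proof -
    have "(\<Sum>x\<in>W. jacobi_elt n (Z x)) = (\<Sum>x\<in>W. signed_comb n (Z x) - sc (jacobi_sign n) (signed_comb n W + Q x))"
      by (rule sum.cong) (simp_all add: JEZ)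
    also have "\<dots> = (\<Sum>x\<in>W. signed_comb n (Z x)) - sc (jacobi_sign n) (sc (of_nat n) (signed_comb n W) + (\<Sum>x\<in>W. Q x))"
      by (simp only: sum_subtractf sc_sum[symmetric] sum.distrib sum_const_sc[OF fW] cW)
    finally have e: "sc (jacobi_sign n) (\<Sum>x\<in>W. jacobi_elt n (Z x)) =
        sc (jacobi_sign n) (\<Sum>x\<in>W. signed_comb n (Z x)) - (sc (of_nat n) (signed_comb n W) + (\<Sum>x\<in>W. Q x))"
      by (simp only: sc_diff sc_sc_involution[OF jacobi_sign_square])
    have j: "jacobi_elt n W = signed_comb n W - sc (jacobi_sign n) (\<Sum>x\<in>W. signed_comb n (Z x))" unfolding jacobi_elt_def Z_def by simp
    show ?thesis unfolding DUe e j using n by (simp add: fun_eq_iff sc_def algebra_simps of_nat_diff)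
  qed
  have "jacobi_elt n W + sc (jacobi_sign n) (\<Sum>x\<in>W. jacobi_elt n (Z x)) \<in> rel_span n"
    by (intro vec.span_add vec.span_scale vec.span_sum jacobi_elt_in_rel_span[OF W n] jacobi_elt_in_rel_span[OF ZS n]) simp
  then show ?thesis unfolding main by (rule vec.span_neg)
qed

text \<open>The incidence between n-subsets W and (n + 1)-subsets T \<supseteq> W, weighted by a function of
  card (W \<inter> U), is inverted by these coefficients (inversion_coeff_delta); this isolates the
  deletion sum of U from the combinations deletion_sum_ext of Jacobi elements.\<close>

definition inversion_coeff :: "nat \<Rightarrow> nat \<Rightarrow> complex" where
  "inversion_coeff n t = (-1) ^ (n - t) / (of_nat (Suc n) * of_nat (n choose t))"

lemma one_plus_of_nat_neq_0: "(1::complex) + of_nat n \<noteq> 0"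
proof -
  have "(of_nat (Suc n) :: complex) \<noteq> 0" by (rule of_nat_neq_0)
  then show ?thesis by simp
qed

lemma neg_divide_add_divide_eq_0:
  fixes s m q c0 c1 N :: complex
  assumes "c0 \<noteq> 0" "c1 \<noteq> 0" "N \<noteq> 0" "s * c1 = m * c0"
  shows "s * (- q / (N * c0)) + m * (q / (N * c1)) = 0"
proof -
  have "s * (- q / (N * c0)) + m * (q / (N * c1)) = q * (m * c0 - s * c1) / (N * c0 * c1)"
    using assms by (simp add: field_simps)
  then show ?thesis using assms(4) by simp
qed

lemma inversion_coeff_rec:
  assumes "k < n"
  shows "of_nat (Suc k) * inversion_coeff n k + of_nat (n - k) * inversion_coeff n (Suc k) = 0"
proof -
  have b: "Suc k * (n choose Suc k) = (n - k) * (n choose k)"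
    using binomial_absorption[of k n] binomial_absorb_comp[of n k] by simp
  have nz1: "(n choose k) \<noteq> 0" "(n choose Suc k) \<noteq> 0" using assms by auto
  have p: "(-1::complex) ^ (n - k) = - ((-1) ^ (n - Suc k))"
    using assms by (simp add: Suc_diff_Suc[symmetric])
  have b': "of_nat (Suc k) * of_nat (n choose Suc k) = (of_nat (n - k) * of_nat (n choose k) :: complex)"
    using b by (metis of_nat_mult)
  have "of_nat (Suc k) * (- ((-1) ^ (n - Suc k)) / (of_nat (Suc n) * of_nat (n choose k))) +
        of_nat (n - k) * ((-1) ^ (n - Suc k) / (of_nat (Suc n) * of_nat (n choose Suc k))) = (0::complex)"
    by (rule neg_divide_add_divide_eq_0) (use nz1 b' one_plus_of_nat_neq_0 in simp_all)
  then show ?thesis unfolding inversion_coeff_def p .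
qed

lemma ksubsets_Suc_intersect:
  assumes "T \<in> ksubsets n (Suc n)" "U \<in> ksubsets n (Suc n)"
  shows "card (T \<inter> U) \<ge> 1"
proof -
  have f: "finite T" "finite U" using assms ksubsets_finite by auto
  have "card (T \<union> U) \<le> card (ground n)"
    using assms by (intro card_mono) (auto simp: ksubsets_subset)
  then have "card (T \<union> U) \<le> 2 * n - 1" by (simp add: card_ground)
  moreover have "card (T \<union> U) + card (T \<inter> U) = card T + card U" using card_Un_Int[OF f] by simp
  ultimately show ?thesis using assms by (simp add: ksubsets_card)
qed

lemma inversion_coeff_delta:
  assumes T: "T \<in> ksubsets n (Suc n)" and U: "U \<in> ksubsets n (Suc n)"
  shows "(\<Sum>w\<in>T. inversion_coeff n (card ((T - {w}) \<inter> U))) = (if T = U then 1 else 0)"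
proof -
  have fT: "finite T" using T ksubsets_finite by auto
  define t where "t = card (T \<inter> U)"
  have cTU: "card (T - U) = Suc n - t"
    using card_Diff_subset_Int[of T U] fT T unfolding t_def by (simp add: ksubsets_card Int_commute)
  have s1: "(\<Sum>w\<in>T \<inter> U. inversion_coeff n (card ((T - {w}) \<inter> U))) = of_nat t * inversion_coeff n (t - 1)"
  proof -
    have "(\<Sum>w\<in>T \<inter> U. inversion_coeff n (card ((T - {w}) \<inter> U))) = (\<Sum>w\<in>T \<inter> U. inversion_coeff n (t - 1))"
    proof (rule sum.cong)
      fix w assume w: "w \<in> T \<inter> U"
      have "(T - {w}) \<inter> U = (T \<inter> U) - {w}" by auto
      then show "inversion_coeff n (card ((T - {w}) \<inter> U)) = inversion_coeff n (t - 1)"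
        using w fT unfolding t_def by simp
    qed simp
    then show ?thesis unfolding t_def by simp
  qed
  have s2: "(\<Sum>w\<in>T - U. inversion_coeff n (card ((T - {w}) \<inter> U))) = of_nat (Suc n - t) * inversion_coeff n t"
  proof -
    have "(\<Sum>w\<in>T - U. inversion_coeff n (card ((T - {w}) \<inter> U))) = (\<Sum>w\<in>T - U. inversion_coeff n t)"
    proof (rule sum.cong)
      fix w assume w: "w \<in> T - U"
      have "(T - {w}) \<inter> U = T \<inter> U" using w by auto
      then show "inversion_coeff n (card ((T - {w}) \<inter> U)) = inversion_coeff n t" unfolding t_def by simp
    qed simp
    then show ?thesis using cTU by simp
  qed
  have split: "(\<Sum>w\<in>T. inversion_coeff n (card ((T - {w}) \<inter> U))) =
     (\<Sum>w\<in>T \<inter> U. inversion_coeff n (card ((T - {w}) \<inter> U))) + (\<Sum>w\<in>T - U. inversion_coeff n (card ((T - {w}) \<inter> U)))"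
    using sum.Int_Diff[OF fT] by blast
  show ?thesis
  proof (cases "T = U")
    case True
    have "(\<Sum>w\<in>T. inversion_coeff n (card ((T - {w}) \<inter> U))) = (\<Sum>w\<in>U. inversion_coeff n n)"
    proof (rule sum.cong)
      fix w assume "w \<in> U"
      then have "card ((U - {w}) \<inter> U) = n" using U ksubsets_finite[OF U] by (simp add: ksubsets_card Int_absorb2)
      then show "inversion_coeff n (card ((T - {w}) \<inter> U)) = inversion_coeff n n" using True by simp
    qed (use True in simp)
    also have "\<dots> = of_nat (Suc n) * inversion_coeff n n" using U by (simp add: ksubsets_card)
    also have "\<dots> = 1" unfolding inversion_coeff_def by (simp del: of_nat_Suc)
    finally show ?thesis using True by simp
  next
    case False
    have t1: "t \<ge> 1" unfolding t_def by (rule ksubsets_Suc_intersect[OF T U])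
    have tn: "t \<le> n"
    proof (rule ccontr)
      assume "\<not> t \<le> n"
      moreover have "t \<le> Suc n" unfolding t_def using T U
        by (metis ksubsets_card ksubsets_finite card_mono inf_le2)
      ultimately have "t = Suc n" by simp
      then have "card (T \<inter> U) = card U" using U by (simp add: ksubsets_card t_def)
      then have "T \<inter> U = U" using ksubsets_finite[OF U] by (metis card_subset_eq inf_le2)
      then have "U \<subseteq> T" by auto
      then have "U = T" using ksubsets_finite[OF T] T U by (metis ksubsets_card card_subset_eq)
      then show False using False by simp
    qed
    obtain k where k: "t = Suc k" using t1 by (cases t) auto
    have "of_nat (Suc k) * inversion_coeff n k + of_nat (n - k) * inversion_coeff n (Suc k) = 0"
      by (rule inversion_coeff_rec) (use k tn in simp)
    then show ?thesis using False split s1 s2 k by simp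
  qed
qed

lemma deletion_sum_in_rel_span:
  assumes U: "U \<in> ksubsets n (Suc n)" and n: "n \<ge> 1"
  shows "deletion_sum n U \<in> rel_span n"
proof -
  define a where "a W = inversion_coeff n (card (W \<inter> U))" for W
  have "(\<Sum>W\<in>ksubsets n n. sc (a W) (deletion_sum_ext n W))
      = (\<Sum>W\<in>ksubsets n n. \<Sum>w\<in>ground n - W. sc (a W) (deletion_sum n (insert w W)))"
    unfolding deletion_sum_ext_def by (simp add: sc_sum)
  also have "\<dots> = (\<Sum>T\<in>ksubsets n (Suc n). \<Sum>w\<in>T. sc (a (T - {w})) (deletion_sum n (insert w (T - {w}))))"
    using sum_subsets_remove_point[of "ground n" "Suc n" "\<lambda>W w. sc (a W) (deletion_sum n (insert w W))"]
    by simp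
  also have "\<dots> = (\<Sum>T\<in>ksubsets n (Suc n). if T = U then deletion_sum n T else 0)"
  proof (rule sum.cong[OF refl])
    fix T assume T: "T \<in> ksubsets n (Suc n)"
    have "(\<Sum>w\<in>T. sc (a (T - {w})) (deletion_sum n (insert w (T - {w}))))
        = (\<Sum>w\<in>T. sc (inversion_coeff n (card ((T - {w}) \<inter> U))) (deletion_sum n T))"
      by (rule sum.cong) (auto simp: a_def insert_absorb)
    also have "\<dots> = sc (\<Sum>w\<in>T. inversion_coeff n (card ((T - {w}) \<inter> U))) (deletion_sum n T)"
      by (simp add: fun_eq_iff sum_fun_apply sum_distrib_right)
    also have "\<dots> = (if T = U then deletion_sum n T else 0)"
      unfolding inversion_coeff_delta[OF T U] by (simp add: fun_eq_iff)
    finally show "(\<Sum>w\<in>T. sc (a (T - {w})) (deletion_sum n (insert w (T - {w})))) = (if T = U then deletion_sum n T else 0)" .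
  qed
  also have "\<dots> = deletion_sum n U" using U by (simp add: sum.delta')
  finally show ?thesis
    using vec.span_sum[of "ksubsets n n" "\<lambda>W. sc (a W) (deletion_sum_ext n W)"]
      vec.span_scale deletion_sum_ext_in_rel_span[OF _ n] by auto
qed

definition garnir :: "nat \<Rightarrow> nat set \<Rightarrow> nat set \<Rightarrow> cvec" where
  "garnir n C V = (\<Sum>Z\<in>subsets_of_card V (n - card C). signed_comb n (C \<union> Z))"

lemma deletion_sum_union:
  assumes fC: "finite C" and fW: "finite W" and dj: "W \<inter> C = {}"
  shows "deletion_sum n (C \<union> W)
       = (\<Sum>u\<in>W. signed_comb n (C \<union> (W - {u}))) + (\<Sum>u\<in>C. signed_comb n ((C - {u}) \<union> W))"
proof -
  have "deletion_sum n (C \<union> W) = (\<Sum>u\<in>W. signed_comb n (C \<union> W - {u})) + (\<Sum>u\<in>C. signed_comb n (C \<union> W - {u}))"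
    unfolding deletion_sum_def using sum.union_disjoint[OF fW fC dj] by (simp add: Un_commute)
  moreover have "C \<union> W - {u} = C \<union> (W - {u})" if "u \<in> W" for u using that dj by blast
  moreover have "C \<union> W - {u} = (C - {u}) \<union> W" if "u \<in> C" for u using that dj by blast
  ultimately show ?thesis by simp
qed

lemma sum_deletion_sum_eq_garnir:
  assumes fC: "finite C" and fV: "finite V" and CV: "C \<inter> V = {}" and kn: "card C \<le> n"
    and cV: "card V = Suc n"
  shows "(\<Sum>W\<in>subsets_of_card V (Suc n - card C). deletion_sum n (C \<union> W))
       = sc (of_nat (Suc (card C))) (garnir n C V) + (\<Sum>u\<in>C. garnir n (C - {u}) V)"
proof -
  define m where "m = Suc n - card C"
  have m1: "m \<ge> 1" unfolding m_def using kn by simp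
  have W: "finite W" "W \<inter> C = {}" if "W \<in> subsets_of_card V m" for W
    using that fV CV finite_subset by (auto simp: subsets_of_card_def)
  have "(\<Sum>W\<in>subsets_of_card V m. \<Sum>u\<in>W. signed_comb n (C \<union> (W - {u})))
      = (\<Sum>Z\<in>subsets_of_card V (m - 1). \<Sum>u\<in>V - Z. signed_comb n (C \<union> Z))"
    by (rule sum_subsets_remove_point[OF fV m1, of "\<lambda>Z u. signed_comb n (C \<union> Z)"])
  also have "\<dots> = (\<Sum>Z\<in>subsets_of_card V (m - 1). sc (of_nat (Suc (card C))) (signed_comb n (C \<union> Z)))"
  proof (rule sum.cong[OF refl])
    fix Z assume Z: "Z \<in> subsets_of_card V (m - 1)"
    have "card (V - Z) = Suc (card C)" using Z fV kn cV unfolding m_def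
      by (auto simp: subsets_of_card_def card_Diff_subset finite_subset)
    then show "(\<Sum>u\<in>V - Z. signed_comb n (C \<union> Z)) = sc (of_nat (Suc (card C))) (signed_comb n (C \<union> Z))"
      using sum_const_sc[of "V - Z" "signed_comb n (C \<union> Z)"] fV by simp
  qed
  also have "\<dots> = sc (of_nat (Suc (card C))) (garnir n C V)"
    unfolding garnir_def sc_sum m_def using kn by (simp add: Suc_diff_le)
  finally have P1: "(\<Sum>W\<in>subsets_of_card V m. \<Sum>u\<in>W. signed_comb n (C \<union> (W - {u})))
      = sc (of_nat (Suc (card C))) (garnir n C V)" .
  have "n - card (C - {u}) = m" if "u \<in> C" for u
  proof -
    have "card C > 0" "card (C - {u}) = card C - 1" using that fC by (auto simp: card_gt_0_iff)
    then show ?thesis using kn unfolding m_def by presburger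
  qed
  then have "(\<Sum>W\<in>subsets_of_card V m. signed_comb n ((C - {u}) \<union> W)) = garnir n (C - {u}) V"
    if "u \<in> C" for u
    using that unfolding garnir_def by simp
  moreover have "(\<Sum>W\<in>subsets_of_card V m. \<Sum>u\<in>C. signed_comb n ((C - {u}) \<union> W))
      = (\<Sum>u\<in>C. \<Sum>W\<in>subsets_of_card V m. signed_comb n ((C - {u}) \<union> W))"
    by (rule sum.swap)
  ultimately have P2: "(\<Sum>W\<in>subsets_of_card V m. \<Sum>u\<in>C. signed_comb n ((C - {u}) \<union> W))
      = (\<Sum>u\<in>C. garnir n (C - {u}) V)"
    by simp
  show ?thesis using deletion_sum_union[OF fC W] P1 P2 unfolding m_def[symmetric] by (simp add: sum.distrib)
qed

lemma garnir_in_rel_span: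
  assumes "C \<subseteq> ground n" "V \<subseteq> ground n" "C \<inter> V = {}" "card V = Suc n" "n \<ge> 1"
  shows "garnir n C V \<in> rel_span n"
  using assms
proof (induction "card C" arbitrary: C rule: less_induct)
  case less
  have fC: "finite C" and fV: "finite V" using less.prems finite_subset[of _ "ground n"] by auto
  have "card C + Suc n \<le> 2 * n - 1"
    using card_mono[of "ground n" "C \<union> V"] card_Un_disjoint[OF fC fV] less.prems by (simp add: card_ground)
  then have kn: "card C \<le> n" by simp
  have subW: "C \<union> W \<in> ksubsets n (Suc n)" if W: "W \<in> subsets_of_card V (Suc n - card C)" for W
  proof -
    have "finite W" "C \<inter> W = {}" using W fV less.prems finite_subset by (auto simp: subsets_of_card_def)
    then have "card (C \<union> W) = Suc n" using card_Un_disjoint[OF fC] W kn by (simp add: subsets_of_card_def)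
    then show ?thesis using W less.prems by (auto simp: subsets_of_card_def)
  qed
  have sum_rel: "(\<Sum>W\<in>subsets_of_card V (Suc n - card C). deletion_sum n (C \<union> W)) \<in> rel_span n"
    by (intro vec.span_sum deletion_sum_in_rel_span subW less.prems(5))
  have IH: "garnir n (C - {u}) V \<in> rel_span n" if "u \<in> C" for u
    using less.hyps[of "C - {u}"] less.prems card_Diff1_less[OF fC that] by auto
  have "(\<Sum>W\<in>subsets_of_card V (Suc n - card C). deletion_sum n (C \<union> W))
      - (\<Sum>u\<in>C. garnir n (C - {u}) V) \<in> rel_span n"
    by (intro vec.span_diff sum_rel vec.span_sum IH)
  then have "sc (of_nat (Suc (card C))) (garnir n C V) \<in> rel_span n"
    unfolding sum_deletion_sum_eq_garnir[OF fC fV less.prems(3) kn less.prems(4)] by simp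
  then have "sc (inverse (of_nat (Suc (card C)))) (sc (of_nat (Suc (card C))) (garnir n C V)) \<in> rel_span n"
    by (rule vec.span_scale)
  then show ?case by (simp add: fun_eq_iff del: of_nat_Suc)
qed

section \<open>Straightening\<close>

lemma sum_power2_less:
  assumes "finite S" "\<forall>b\<in>S. b < m"
  shows "(\<Sum>b\<in>S. (2::nat) ^ b) < 2 ^ m"
proof -
  have "(\<Sum>b\<in>S. (2::nat) ^ b) \<le> (\<Sum>b<m. 2 ^ b)"
    by (rule sum_mono2) (use assms in auto)
  also have "\<dots> < 2 ^ m" by (induction m) auto
  finally show ?thesis .
qed

text \<open>Comparing sets by their binary expansion orders them primarily by their largest elements.\<close>

definition binary_key :: "nat set \<Rightarrow> nat" where
  "binary_key X = (\<Sum>x\<in>X. 2 ^ x)"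

lemma binary_key_union: "finite A \<Longrightarrow> finite B \<Longrightarrow> A \<inter> B = {} \<Longrightarrow> binary_key (A \<union> B) = binary_key A + binary_key B"
  unfolding binary_key_def by (rule sum.union_disjoint)

lemma binary_key_exchange_less:
  assumes fZ0: "finite Z0" and ZB: "Z \<subseteq> Z0 \<union> B" "Z0 \<inter> B = {}"
    and card: "card Z = card Z0" "Z \<noteq> Z0"
    and below: "\<forall>b\<in>B. b < m" and above: "\<forall>z\<in>Z0. m \<le> z"
  shows "binary_key Z < binary_key Z0"
proof -
  have fZB: "finite (Z \<inter> B)" by (rule finite_subset[of _ "{..<m}"]) (use below in auto)
  have Z: "(Z \<inter> Z0) \<union> (Z \<inter> B) = Z" using ZB by auto
  have fZ: "finite Z" by (rule finite_subset[of _ "Z0 \<union> (Z \<inter> B)"]) (use ZB fZ0 fZB in auto)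
  have "\<not> Z0 \<subseteq> Z" using card_subset_eq[OF fZ, of Z0] card by auto
  then obtain z where z: "z \<in> Z0 - Z" by auto
  have "binary_key Z = binary_key (Z \<inter> Z0) + binary_key (Z \<inter> B)"
    using binary_key_union[of "Z \<inter> Z0" "Z \<inter> B"] fZ0 fZB ZB(2) unfolding Z by auto
  moreover have "binary_key Z0 = binary_key (Z \<inter> Z0) + binary_key (Z0 - Z)"
  proof -
    have "(Z \<inter> Z0) \<union> (Z0 - Z) = Z0" by auto
    then show ?thesis using binary_key_union[of "Z \<inter> Z0" "Z0 - Z"] fZ0 by auto
  qed
  moreover have "binary_key (Z \<inter> B) < 2 ^ m"
    unfolding binary_key_def using below fZB by (intro sum_power2_less) auto
  moreover have "(2::nat) ^ m \<le> 2 ^ z" using z above by simp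
  moreover have "(2::nat) ^ z \<le> binary_key (Z0 - Z)"
    unfolding binary_key_def using z fZ0 by (intro member_le_sum) auto
  ultimately show ?thesis by linarith
qed

lemma binary_key_less_replace:
  assumes fX: "finite X" and fY: "finite Y" and R: "finite R" "R \<noteq> {}" "inj_on f R" "inj_on g R"
    and "Y - X = f ` R" "X - Y = g ` R" and less: "\<forall>r\<in>R. f r < g r"
  shows "binary_key Y < binary_key X"
proof -
  have "(\<Sum>r\<in>R. (2::nat) ^ f r) < (\<Sum>r\<in>R. 2 ^ g r)"
    using less by (intro sum_strict_mono[OF R(1,2)]) simp
  moreover have "binary_key X = binary_key (X \<inter> Y) + binary_key (X - Y)"
    unfolding binary_key_def using fX by (metis sum.Int_Diff)
  moreover have "binary_key Y = binary_key (X \<inter> Y) + binary_key (Y - X)"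
    unfolding binary_key_def using fY by (metis Int_commute sum.Int_Diff)
  moreover have "binary_key (X - Y) = (\<Sum>r\<in>R. 2 ^ g r)" "binary_key (Y - X) = (\<Sum>r\<in>R. 2 ^ f r)"
    unfolding assms(7,8) binary_key_def using sum.reindex[OF R(3)] sum.reindex[OF R(4)] by auto
  ultimately show ?thesis by linarith
qed

lemma in_set_drop_ge: "sorted l \<Longrightarrow> x \<in> set (drop j l) \<Longrightarrow> l ! j \<le> x"
  by (auto simp: in_set_conv_nth sorted_nth_mono)

lemma in_set_take_le: "sorted l \<Longrightarrow> x \<in> set (take (Suc j) l) \<Longrightarrow> j < length l \<Longrightarrow> x \<le> l ! j"
  by (auto simp: in_set_conv_nth sorted_nth_mono)

definition standard_brackets :: "nat \<Rightarrow> cvec set" where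
  "standard_brackets n = ind ` {c. standard_comb n c}"

abbreviation standard_span :: "nat \<Rightarrow> cvec set" where
  "standard_span n \<equiv> vec.span (standard_brackets n \<union> relations n)"

lemma rel_span_imp_standard_span: "v \<in> rel_span n \<Longrightarrow> v \<in> standard_span n"
  using vec.span_mono[of "relations n" "standard_brackets n \<union> relations n"] by auto

lemma normal_comb_standard:
  assumes "X \<in> ksubsets n n" "n \<ge> 1"
    and "\<forall>j < n - 1. sorted_list_of_set X ! j < sorted_list_of_set (ground n - X) ! j"
  shows "standard_comb n (sorted_list_of_set X, sorted_list_of_set (ground n - X))"
  using assms valid_comb_normal[of X n] by (auto simp: standard_comb_def subsets_of_card_def)

text \<open>If the first column of the normal comb on X violates standardness in row j, the Garnir
  relation on the first j entries of that column and the n + 1 entries from row j on of the first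
  column and up to row j of the second expresses X through sets of smaller binary key.\<close>

lemma signed_comb_in_standard_span:
  assumes X: "X \<in> ksubsets n n" and n: "n \<ge> 1"
  shows "signed_comb n X \<in> standard_span n"
  using X
proof (induction "binary_key X" arbitrary: X rule: less_induct)
  case less
  define xs where "xs = sorted_list_of_set X"
  define ys where "ys = sorted_list_of_set (ground n - X)"
  have XA: "X \<subseteq> ground n" and fX: "finite X" and cX: "card X = n"
    using less.prems by (auto simp: ksubsets_subset ksubsets_finite ksubsets_card)
  have pX: "set xs = X" "distinct xs" "length xs = n" "sorted xs"
    using fX cX unfolding xs_def by auto
  have pY: "set ys = ground n - X" "distinct ys" "length ys = n - 1" "sorted ys"
    using card_ground_diff[OF less.prems] unfolding ys_def by auto
  show ?case
  proof (cases "\<forall>j < n - 1. xs ! j < ys ! j")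
    case True
    then have "ind (xs, ys) \<in> standard_span n"
      using normal_comb_standard[OF less.prems n] unfolding xs_def ys_def standard_brackets_def
      by (intro vec.span_base) auto
    then show ?thesis unfolding signed_comb_def normal_comb_def xs_def ys_def by (rule vec.span_scale)
  next
    case False
    then obtain j where j: "j < n - 1" "\<not> xs ! j < ys ! j" by blast
    have "xs ! j \<in> X" "ys ! j \<notin> X" using pX pY j nth_mem[of j xs] nth_mem[of j ys] by auto
    then have jlt: "ys ! j < xs ! j" using j by (metis linorder_neqE_nat)
    define C where "C = set (take j xs)"
    define Z0 where "Z0 = set (drop j xs)"
    define B where "B = set (take (Suc j) ys)"
    define V where "V = Z0 \<union> B"
    have CZ0: "C \<inter> Z0 = {}" "X = C \<union> Z0"
      unfolding C_def Z0_def using pX(2) set_take_disj_set_drop_if_distinct[of xs j j]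
      by (simp_all flip: pX(1) set_append)
    have BX: "B \<subseteq> ground n - X" unfolding B_def using pY set_take_subset[of "Suc j" ys] by simp
    have cC: "card C = j" and cZ0: "card Z0 = n - j" and cB: "card B = Suc j"
      unfolding C_def Z0_def B_def using pX pY j by (simp_all add: distinct_card)
    have Z0B: "Z0 \<inter> B = {}" using BX CZ0 by auto
    have fV: "finite V" unfolding V_def Z0_def B_def by simp
    have cV: "card V = Suc n" unfolding V_def using card_Un_disjoint[of Z0 B] Z0B cZ0 cB j
      unfolding Z0_def B_def by simp
    have CV: "C \<inter> V = {}" and CA: "C \<subseteq> ground n" and VA: "V \<subseteq> ground n"
      unfolding V_def using CZ0 BX XA by auto
    define S where "S = subsets_of_card V (n - j)"
    have Z0S: "Z0 \<in> S" unfolding S_def subsets_of_card_def V_def using cZ0 by auto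
    have "garnir n C V = signed_comb n X + (\<Sum>Z\<in>S - {Z0}. signed_comb n (C \<union> Z))"
      unfolding garnir_def cC S_def[symmetric] using sum.remove[OF _ Z0S] fV CZ0 by (simp add: S_def)
    moreover have smaller: "signed_comb n (C \<union> Z) \<in> standard_span n" if Z: "Z \<in> S - {Z0}" for Z
    proof (rule less.hyps)
      have ZV: "Z \<subseteq> V" and cZ: "card Z = n - j" using Z unfolding S_def subsets_of_card_def by auto
      have fZ: "finite Z" using ZV fV finite_subset by blast
      have CZ: "C \<inter> Z = {}" using CV ZV by auto
      show "C \<union> Z \<in> ksubsets n n" unfolding subsets_of_card_def
        using CA VA ZV card_Un_disjoint[OF _ fZ CZ] cC cZ j unfolding C_def by auto
      have "binary_key Z < binary_key Z0"
      proof (rule binary_key_exchange_less[where m = "xs ! j"])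
        show "\<forall>b\<in>B. b < xs ! j"
        proof
          fix b assume "b \<in> B"
          then have "b \<le> ys ! j" unfolding B_def using pY j by (intro in_set_take_le) auto
          then show "b < xs ! j" using jlt by simp
        qed
        show "\<forall>z\<in>Z0. xs ! j \<le> z" unfolding Z0_def using pX by (auto intro: in_set_drop_ge)
        show "finite Z0" using fV unfolding V_def by simp
      qed (use ZV Z0B cZ cZ0 Z in \<open>auto simp: V_def\<close>)
      then show "binary_key (C \<union> Z) < binary_key X"
        using binary_key_union[of C Z] binary_key_union[of C Z0] CZ CZ0 fZ
        unfolding C_def Z0_def by simp
    qed
    moreover have "garnir n C V - (\<Sum>Z\<in>S - {Z0}. signed_comb n (C \<union> Z)) \<in> standard_span n"
      by (intro vec.span_diff vec.span_sum rel_span_imp_standard_span[OF garnir_in_rel_span[OF CA VA CV cV n]] smaller)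
    ultimately show ?thesis by simp
  qed
qed

lemma normal_comb_eq_signed: "normal_comb n X = sc ((-1) ^ (\<Sum>X)) (signed_comb n X)"
  unfolding signed_comb_def by (simp add: sc_sc_involution minus_one_power_square)

lemma standard_comb_valid: "standard_comb n c \<Longrightarrow> valid_comb n c"
  by (simp add: standard_comb_def)

lemma relations_subset_span_combs: "n \<ge> 1 \<Longrightarrow> relations n \<subseteq> vec.span (combs_space n)"
proof
  fix r assume n: "n \<ge> 1" and r: "r \<in> relations n"
  have bb: "ind c \<in> vec.span (combs_space n)" if "valid_comb n c" for c
    using that by (intro vec.span_base) (auto simp: combs_space_def)
  from r consider
      (a) xs ys i j where "r = ind (swap_pos xs i j, ys) + ind (xs, ys)" "valid_comb n (xs, ys)" "i < j" "j < n"
    | (b) xs ys i j where "r = ind (xs, swap_pos ys i j) + ind (xs, ys)" "valid_comb n (xs, ys)" "i < j" "j < n - 1"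
    | (c) xs ys where "r = ind (xs, ys) - (\<Sum>i<n. sc ((-1) ^ (n - 1 - i)) (ind (ys @ [xs ! i], remove_nth i xs)))"
          "valid_comb n (xs, ys)"
    unfolding relations_def by blast
  then show "r \<in> vec.span (combs_space n)"
  proof cases
    case a
    have "valid_comb n (swap_pos xs i j, ys)" using a by (intro valid_comb_swap_fst) (auto simp: valid_comb_def)
    then show ?thesis using a bb by (auto intro: vec.span_add)
  next
    case b
    have "valid_comb n (xs, swap_pos ys i j)" using b by (intro valid_comb_swap_snd) (auto simp: valid_comb_def)
    then show ?thesis using b bb by (auto intro: vec.span_add)
  next
    case c
    have "(\<Sum>i<n. sc ((-1) ^ (n - 1 - i)) (ind (ys @ [xs ! i], remove_nth i xs))) \<in> vec.span (combs_space n)"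
      by (intro vec.span_sum vec.span_scale bb valid_comb_jacobi_term[OF c(2) _ n]) simp
    then show ?thesis using c bb[OF c(2)] by (auto intro: vec.span_diff)
  qed
qed

lemma standard_span_eq_span_combs:
  assumes n: "n \<ge> 1"
  shows "standard_span n = vec.span (combs_space n)"
proof
  show "standard_span n \<subseteq> vec.span (combs_space n)"
  proof (rule vec.span_minimal)
    show "standard_brackets n \<union> relations n \<subseteq> vec.span (combs_space n)"
    proof
      fix v assume "v \<in> standard_brackets n \<union> relations n"
      then show "v \<in> vec.span (combs_space n)"
      proof
        assume "v \<in> standard_brackets n"
        then show ?thesis unfolding standard_brackets_def combs_space_def
          by (auto intro!: vec.span_base simp: standard_comb_valid)
      next
        assume "v \<in> relations n"
        then show ?thesis using relations_subset_span_combs[OF n] by auto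
      qed
    qed
  qed (rule vec.subspace_span)
next
  show "vec.span (combs_space n) \<subseteq> standard_span n"
  proof (rule vec.span_minimal)
    show "combs_space n \<subseteq> standard_span n"
    proof
      fix v assume "v \<in> combs_space n"
      then obtain xs ys where v: "v = ind (xs, ys)" and vc: "valid_comb n (xs, ys)"
        unfolding combs_space_def by auto
      have X: "set xs \<in> ksubsets n n" using vc unfolding subsets_of_card_def valid_comb_def ground_def
        by (auto simp: distinct_card)
      have a: "ind (xs, ys) - sc (list_sign xs * list_sign ys) (normal_comb n (set xs)) \<in> standard_span n"
        by (rule rel_span_imp_standard_span[OF comb_eq_normal_comb_mod_relations[OF vc]])
      have b: "sc (list_sign xs * list_sign ys) (normal_comb n (set xs)) \<in> standard_span n"
        unfolding normal_comb_eq_signed by (intro vec.span_scale signed_comb_in_standard_span[OF X n])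
      have "ind (xs, ys) = (ind (xs, ys) - sc (list_sign xs * list_sign ys) (normal_comb n (set xs))) + sc (list_sign xs * list_sign ys) (normal_comb n (set xs))"
        by simp
      then show "v \<in> standard_span n" unfolding v using vec.span_add[OF a b] by metis
    qed
  qed (rule vec.subspace_span)
qed




section \<open>Linear independence\<close>

definition transversal :: "nat \<Rightarrow> comb \<Rightarrow> nat set \<Rightarrow> bool" where
  "transversal n T X \<longleftrightarrow> fst T ! (n - 1) \<in> X \<and> (\<forall>r < n - 1. (fst T ! r \<in> X) = (snd T ! r \<notin> X))"

definition row_sign :: "nat \<Rightarrow> comb \<Rightarrow> nat set \<Rightarrow> complex" where
  "row_sign n T X = (-1) ^ card {r. r < n - 1 \<and> snd T ! r \<in> X}"

definition transversal_sign :: "nat \<Rightarrow> comb \<Rightarrow> nat set \<Rightarrow> complex" where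
  "transversal_sign n T X = (if transversal n T X then row_sign n T X else 0)"

locale standard_tableau =
  fixes n :: nat and tx ty :: "nat list"
  assumes std: "standard_comb n (tx, ty)" and n1: "n \<ge> 1"
begin

lemma lengths: "length tx = n" "length ty = n - 1"
  using std by (auto simp: standard_comb_def valid_comb_def)

lemma distinct_tx_ty: "distinct (tx @ ty)"
  using std by (auto simp: standard_comb_def valid_comb_def)

lemma set_tx_ty: "set tx \<union> set ty = ground n"
  using std by (auto simp: standard_comb_def valid_comb_def ground_def)

lemma tx_less_ty: "r < n - 1 \<Longrightarrow> tx ! r < ty ! r"
  using std by (auto simp: standard_comb_def)

lemma tx_inj: "i < n \<Longrightarrow> j < n \<Longrightarrow> tx ! i = tx ! j \<Longrightarrow> i = j"
  using distinct_tx_ty lengths by (simp add: nth_eq_iff_index_eq)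

lemma ty_inj: "i < n - 1 \<Longrightarrow> j < n - 1 \<Longrightarrow> ty ! i = ty ! j \<Longrightarrow> i = j"
  using distinct_tx_ty lengths by (simp add: nth_eq_iff_index_eq)

lemma tx_neq_ty: "i < n \<Longrightarrow> j < n - 1 \<Longrightarrow> tx ! i \<noteq> ty ! j"
proof
  assume ij: "i < n" "j < n - 1" and e: "tx ! i = ty ! j"
  have "tx ! i \<in> set tx" "ty ! j \<in> set ty" using ij lengths by auto
  then show False using distinct_tx_ty e by auto
qed

abbreviation "t \<equiv> tx ! (n - 1)"

lemma tx_neq_last: "r < n - 1 \<Longrightarrow> tx ! r \<noteq> t"
proof
  assume r: "r < n - 1" and e: "tx ! r = t"
  have "r = n - 1" by (rule tx_inj) (use r e n1 in auto)
  then show False using r by simp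
qed

lemma ty_neq_last: "r < n - 1 \<Longrightarrow> ty ! r \<noteq> t"
  using tx_neq_ty[of "n - 1" r] n1 by auto

lemma tx_in_ground: "i < n \<Longrightarrow> tx ! i \<in> ground n" using set_tx_ty lengths by (metis UnI1 nth_mem)
lemma ty_in_ground: "i < n - 1 \<Longrightarrow> ty ! i \<in> ground n" using set_tx_ty lengths by (metis UnI2 nth_mem)

lemma ground_cases: "a \<in> ground n \<Longrightarrow> a = t \<or> (\<exists>r < n - 1. a = tx ! r \<or> a = ty ! r)"
proof -
  assume "a \<in> ground n"
  then have "a \<in> set tx \<or> a \<in> set ty" using set_tx_ty by auto
  then show ?thesis
  proof
    assume "a \<in> set tx"
    then obtain i where i: "i < n" "a = tx ! i" using lengths by (auto simp: in_set_conv_nth)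
    show ?thesis
    proof (cases "i = n - 1")
      case True then show ?thesis using i by simp
    next
      case False then have "i < n - 1" using i by simp
      then show ?thesis using i by blast
    qed
  next
    assume "a \<in> set ty"
    then obtain i where i: "i < n - 1" "a = ty ! i" using lengths by (auto simp: in_set_conv_nth)
    then show ?thesis by auto
  qed
qed

lemma transversal_iff: "transversal n (tx, ty) X \<longleftrightarrow> t \<in> X \<and> (\<forall>r < n - 1. (tx ! r \<in> X) = (ty ! r \<notin> X))"
  by (simp add: transversal_def)

lemma row_sign_flip:
  assumes "m < n - 1" "\<forall>r < n - 1. r \<noteq> m \<longrightarrow> (ty ! r \<in> Z1) = (ty ! r \<in> Z0)"
    "(ty ! m \<in> Z1) \<noteq> (ty ! m \<in> Z0)"
  shows "row_sign n (tx, ty) Z1 = - row_sign n (tx, ty) Z0"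
proof -
  define R0 where "R0 = {r. r < n - 1 \<and> ty ! r \<in> Z0}"
  define R1 where "R1 = {r. r < n - 1 \<and> ty ! r \<in> Z1}"
  have f: "finite R0" "finite R1" unfolding R0_def R1_def by auto
  have e: "row_sign n (tx, ty) Z0 = (-1) ^ card R0" "row_sign n (tx, ty) Z1 = (-1) ^ card R1"
    unfolding row_sign_def R0_def R1_def by simp_all
  show ?thesis
  proof (cases "ty ! m \<in> Z1")
    case True
    then have "R1 = insert m R0" "m \<notin> R0" using assms unfolding R0_def R1_def by auto
    then show ?thesis unfolding e using f by simp
  next
    case False
    then have "R0 = insert m R1" "m \<notin> R1" using assms unfolding R0_def R1_def by auto
    then show ?thesis unfolding e using f by simp
  qed
qed

lemma transversal_insert_last_iff:
  assumes "t \<in> X"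
  shows "transversal n (tx, ty) (insert t (ground n - X)) \<longleftrightarrow> transversal n (tx, ty) X"
proof -
  have "(tx ! r \<in> insert t (ground n - X)) = (tx ! r \<notin> X)"
    "(ty ! r \<in> insert t (ground n - X)) = (ty ! r \<notin> X)" if "r < n - 1" for r
    using that tx_neq_last[OF that] ty_neq_last[OF that] tx_in_ground[of r] ty_in_ground[OF that] by auto
  then show ?thesis unfolding transversal_iff using assms by auto
qed

lemma transversal_swap_row:
  assumes tr: "transversal n (tx, ty) (insert a Y)" and m: "m < n - 1"
    and pair: "(a = tx ! m \<and> b = ty ! m) \<or> (a = ty ! m \<and> b = tx ! m)" and ab: "a \<notin> Y" "b \<notin> Y"
  shows "transversal n (tx, ty) (insert b Y)"
    and "row_sign n (tx, ty) (insert b Y) = - row_sign n (tx, ty) (insert a Y)"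
proof -
  have mn: "m < n" using m by simp
  have neq: "tx ! m \<noteq> ty ! m" by (rule tx_neq_ty[OF mn m])
  have other_rows: "tx ! r \<noteq> a \<and> tx ! r \<noteq> b \<and> ty ! r \<noteq> a \<and> ty ! r \<noteq> b"
    if rm: "r \<noteq> m" and r: "r < n - 1" for r
  proof -
    have rn: "r < n" using r by simp
    have "tx ! r \<noteq> tx ! m" using tx_inj[OF rn mn] rm by blast
    moreover have "ty ! r \<noteq> ty ! m" using ty_inj[OF r m] rm by blast
    moreover have "tx ! r \<noteq> ty ! m" by (rule tx_neq_ty[OF rn m])
    moreover have "ty ! r \<noteq> tx ! m" using tx_neq_ty[OF mn r] by metis
    ultimately show ?thesis using pair by metis
  qed
  have tr0: "t \<in> insert a Y" "\<forall>r < n - 1. (tx ! r \<in> insert a Y) = (ty ! r \<notin> insert a Y)"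
    using tr by (auto simp: transversal_iff)
  have "a \<noteq> t" using pair tx_neq_last[OF m] ty_neq_last[OF m] by metis
  then show "transversal n (tx, ty) (insert b Y)"
    unfolding transversal_iff
  proof (intro conjI allI impI)
    show "t \<in> insert b Y" using tr0(1) \<open>a \<noteq> t\<close> by auto
    fix r assume r: "r < n - 1"
    show "(tx ! r \<in> insert b Y) = (ty ! r \<notin> insert b Y)"
    proof (cases "r = m")
      case True
      have "(tx ! m \<in> insert b Y) = (tx ! m = b)" "(ty ! m \<in> insert b Y) = (ty ! m = b)"
        using pair ab by auto
      then show ?thesis using True pair neq by auto
    next
      case False
      then have "(tx ! r \<in> insert b Y) = (tx ! r \<in> insert a Y)" "(ty ! r \<in> insert b Y) = (ty ! r \<in> insert a Y)"
        using other_rows[OF False r] by simp_all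
      then show ?thesis using tr0(2) r by simp
    qed
  qed
  show "row_sign n (tx, ty) (insert b Y) = - row_sign n (tx, ty) (insert a Y)"
  proof (rule row_sign_flip[OF m])
    show "\<forall>r < n - 1. r \<noteq> m \<longrightarrow> (ty ! r \<in> insert b Y) = (ty ! r \<in> insert a Y)"
      using other_rows by auto
    have "(ty ! m \<in> insert b Y) = (ty ! m = b)" "(ty ! m \<in> insert a Y) = (ty ! m = a)"
      using pair ab by auto
    then show "(ty ! m \<in> insert b Y) \<noteq> (ty ! m \<in> insert a Y)" using pair neq by auto
  qed
qed

lemma card_split_rows:
  "card {r. r < n - 1 \<and> ty ! r \<in> X} + card {r. r < n - 1 \<and> ty ! r \<notin> X} = n - 1"
proof -
  have "{r. r < n - 1 \<and> ty ! r \<in> X} \<union> {r. r < n - 1 \<and> ty ! r \<notin> X} = {..<n - 1}" by auto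
  moreover have "{r. r < n - 1 \<and> ty ! r \<in> X} \<inter> {r. r < n - 1 \<and> ty ! r \<notin> X} = {}" by auto
  ultimately show ?thesis using card_Un_disjoint[of "{r. r < n - 1 \<and> ty ! r \<in> X}" "{r. r < n - 1 \<and> ty ! r \<notin> X}"]
    by simp
qed

lemma sum_transversal_sign_transversal:
  assumes X: "X \<in> ksubsets n n" and tr: "transversal n (tx, ty) X"
  shows "(\<Sum>x\<in>X. transversal_sign n (tx, ty) (insert x (ground n - X)))
       = (-1) ^ (n - 1) * transversal_sign n (tx, ty) X"
proof -
  have fX: "finite X" using X by (rule ksubsets_finite)
  have tX: "t \<in> X" using tr by (simp add: transversal_iff)
  have "transversal_sign n (tx, ty) (insert x (ground n - X)) = 0" if "x \<in> X - {t}" for x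
    using that tX unfolding transversal_sign_def transversal_iff by auto
  then have "(\<Sum>x\<in>X. transversal_sign n (tx, ty) (insert x (ground n - X)))
      = transversal_sign n (tx, ty) (insert t (ground n - X))"
    using sum.remove[OF fX tX, of "\<lambda>x. transversal_sign n (tx, ty) (insert x (ground n - X))"] by simp
  also have "\<dots> = (-1) ^ card {r. r < n - 1 \<and> ty ! r \<notin> X}"
  proof -
    have "{r. r < n - 1 \<and> ty ! r \<in> insert t (ground n - X)} = {r. r < n - 1 \<and> ty ! r \<notin> X}"
      using ty_neq_last ty_in_ground by auto
    then show ?thesis unfolding transversal_sign_def row_sign_def
      using transversal_insert_last_iff[OF tX] tr by simp
  qed
  also have "\<dots> = (-1) ^ (n - 1 + card {r. r < n - 1 \<and> ty ! r \<in> X})"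
    by (rule minus_one_power_eq_if_even) (use card_split_rows[of X] in \<open>simp add: algebra_simps\<close>)
  also have "\<dots> = (-1) ^ (n - 1) * transversal_sign n (tx, ty) X"
    using tr by (simp add: transversal_sign_def row_sign_def power_add)
  finally show ?thesis .
qed

text \<open>If X is not transversal, the transversals among the sets insert x (ground n - X) come in
  pairs differing in one row, whose signs cancel.\<close>

lemma sum_transversal_sign_not_transversal:
  assumes X: "X \<in> ksubsets n n" and ntr: "\<not> transversal n (tx, ty) X"
  shows "(\<Sum>x\<in>X. transversal_sign n (tx, ty) (insert x (ground n - X))) = 0"
proof (cases "\<exists>x0\<in>X. transversal n (tx, ty) (insert x0 (ground n - X))")
  case False
  then show ?thesis unfolding transversal_sign_def by simp
next
  case True
  define Y where "Y = ground n - X"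
  define P where "P x = transversal_sign n (tx, ty) (insert x Y)" for x
  have XA: "X \<subseteq> ground n" and fX: "finite X" using X by (auto simp: ksubsets_subset ksubsets_finite)
  obtain x0 where x0X: "x0 \<in> X" and tr0: "transversal n (tx, ty) (insert x0 Y)"
    using True unfolding Y_def by blast
  have "x0 \<noteq> t" using transversal_insert_last_iff[of X] x0X tr0 ntr unfolding Y_def by blast
  then obtain m where m: "m < n - 1" "x0 = tx ! m \<or> x0 = ty ! m" using ground_cases[of x0] x0X XA by blast
  define p where "p = (if x0 = tx ! m then ty ! m else tx ! m)"
  have mn: "m < n" using m(1) by simp
  have pair: "(x0 = tx ! m \<and> p = ty ! m) \<or> (x0 = ty ! m \<and> p = tx ! m)"
    unfolding p_def using m(2) by auto
  have neq: "tx ! m \<noteq> ty ! m" by (rule tx_neq_ty[OF mn m(1)])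
  have px0: "p \<noteq> x0" using pair neq by metis
  have "(tx ! m \<in> insert x0 Y) = (ty ! m \<notin> insert x0 Y)" using tr0 m(1) by (simp add: transversal_iff)
  then have "p \<notin> insert x0 Y" using pair by auto
  moreover have "p \<in> ground n" using pair tx_in_ground[OF mn] ty_in_ground[OF m(1)] by metis
  ultimately have pX: "p \<in> X" unfolding Y_def by blast
  have Y: "x0 \<notin> Y" "p \<notin> Y" using x0X pX unfolding Y_def by blast+
  have zero: "P x = 0" if "x \<in> X - {x0, p}" for x
  proof -
    have "tx ! m \<notin> insert x Y" "ty ! m \<notin> insert x Y" using that pair Y by auto
    then have "\<not> transversal n (tx, ty) (insert x Y)" unfolding transversal_iff using m(1) by blast
    then show ?thesis unfolding P_def transversal_sign_def by simp
  qed
  have "(\<Sum>x\<in>X. P x) = (\<Sum>x\<in>{x0, p}. P x) + (\<Sum>x\<in>X - {x0, p}. P x)"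
    using sum.subset_diff[of "{x0, p}" X P] x0X pX fX by (simp add: add.commute)
  also have "\<dots> = P x0 + P p" using zero px0 by simp
  also have "\<dots> = 0"
    using transversal_swap_row[OF tr0 m(1) pair Y] tr0 unfolding P_def transversal_sign_def by simp
  finally show ?thesis unfolding P_def Y_def .
qed

lemma transversal_sign_jacobi:
  assumes "X \<in> ksubsets n n"
  shows "transversal_sign n (tx, ty) X
       = (-1) ^ (n - 1) * (\<Sum>x\<in>X. transversal_sign n (tx, ty) (insert x (ground n - X)))"
proof (cases "transversal n (tx, ty) X")
  case True
  then show ?thesis using sum_transversal_sign_transversal[OF assms] by (simp add: mult.assoc[symmetric])
next
  case False
  then show ?thesis using sum_transversal_sign_not_transversal[OF assms] by (simp add: transversal_sign_def)
qed

end


text \<open>For a standard bracket T, the functional pairing (dual_coeff n T) kills all relations,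
  is nonzero at T, and vanishes at every other standard bracket whose inner set has binary key at
  most that of T.\<close>

definition tableau_coeff :: "nat \<Rightarrow> comb \<Rightarrow> nat set \<Rightarrow> complex" where
  "tableau_coeff n T X = (-1) ^ (\<Sum>X) * transversal_sign n T X"

lemma (in standard_tableau) tableau_coeff_jacobi:
  assumes X: "X \<in> ksubsets n n"
  shows "tableau_coeff n (tx, ty) X = (\<Sum>x\<in>X. (-1) ^ Suc x * tableau_coeff n (tx, ty) (insert x (ground n - X)))"
proof -
  have XA: "X \<subseteq> ground n" using X by (simp add: ksubsets_subset)
  define e where "e = ((-1::complex) ^ (\<Sum>X))"
  have ee: "e * e = 1" unfolding e_def by (rule minus_one_power_square)
  have "e * (\<Sum>x\<in>X. (-1) ^ Suc x * tableau_coeff n (tx, ty) (insert x (ground n - X)))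
      = (\<Sum>x\<in>X. jacobi_sign n * transversal_sign n (tx, ty) (insert x (ground n - X)))"
    unfolding sum_distrib_left
  proof (rule sum.cong[OF refl])
    fix x assume x: "x \<in> X"
    have "e * ((-1) ^ Suc x * tableau_coeff n (tx, ty) (insert x (ground n - X))) =
          (e * (-1) ^ Suc x) * (-1) ^ (\<Sum>(insert x (ground n - X))) * transversal_sign n (tx, ty) (insert x (ground n - X))"
      unfolding tableau_coeff_def by (simp add: mult.assoc)
    also have "\<dots> = jacobi_sign n * ((-1) ^ (\<Sum>(insert x (ground n - X))) * (-1) ^ (\<Sum>(insert x (ground n - X)))) *
          transversal_sign n (tx, ty) (insert x (ground n - X))"
      unfolding e_def jacobi_sign_coeff[OF XA x] by (simp add: mult.assoc)
    also have "\<dots> = jacobi_sign n * transversal_sign n (tx, ty) (insert x (ground n - X))" by (simp add: minus_one_power_square)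
    finally show "e * ((-1) ^ Suc x * tableau_coeff n (tx, ty) (insert x (ground n - X))) = jacobi_sign n * transversal_sign n (tx, ty) (insert x (ground n - X))" .
  qed
  also have "\<dots> = jacobi_sign n * (\<Sum>x\<in>X. transversal_sign n (tx, ty) (insert x (ground n - X)))" by (simp add: sum_distrib_left)
  also have "\<dots> = transversal_sign n (tx, ty) X" using transversal_sign_jacobi[OF X] jacobi_sign_eq[OF n1] by simp
  finally have "e * (\<Sum>x\<in>X. (-1) ^ Suc x * tableau_coeff n (tx, ty) (insert x (ground n - X))) = transversal_sign n (tx, ty) X" .
  then have "e * (e * (\<Sum>x\<in>X. (-1) ^ Suc x * tableau_coeff n (tx, ty) (insert x (ground n - X)))) = e * transversal_sign n (tx, ty) X"
    by simp
  then show ?thesis using ee unfolding tableau_coeff_def e_def[symmetric] by (simp add: mult.assoc[symmetric])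
qed

definition dual_coeff :: "nat \<Rightarrow> comb \<Rightarrow> comb \<Rightarrow> complex" where
  "dual_coeff n T c = list_sign (fst c) * list_sign (snd c) * tableau_coeff n T (set (fst c))"

definition pairing :: "(comb \<Rightarrow> complex) \<Rightarrow> nat \<Rightarrow> cvec \<Rightarrow> complex" where
  "pairing f n v = (\<Sum>c\<in>{c. valid_comb n c}. v c * f c)"

lemma finite_valid_combs: "finite {c. valid_comb n c}"
proof -
  have "{c. valid_comb n c} \<subseteq> {xs. set xs \<subseteq> ground n \<and> length xs = n} \<times> {ys. set ys \<subseteq> ground n \<and> length ys = n - 1}"
    unfolding valid_comb_def ground_def by auto
  moreover have "finite ({xs. set xs \<subseteq> ground n \<and> length xs = n} \<times> {ys. set ys \<subseteq> ground n \<and> length ys = n - 1})"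
    by (intro finite_cartesian_product finite_lists_length_eq) simp_all
  ultimately show ?thesis by (rule finite_subset)
qed

lemma pairing_add: "pairing f n (v + w) = pairing f n v + pairing f n w"
  unfolding pairing_def by (simp add: algebra_simps sum.distrib)

lemma pairing_sc: "pairing f n (sc a v) = a * pairing f n v"
  unfolding pairing_def by (simp add: sum_distrib_left mult.assoc)

lemma pairing_diff: "pairing f n (v - w) = pairing f n v - pairing f n w"
  unfolding pairing_def by (simp add: algebra_simps sum_subtractf)

lemma pairing_sum: "pairing f n (\<Sum>i\<in>S. g i) = (\<Sum>i\<in>S. pairing f n (g i))"
  unfolding pairing_def by (simp add: sum_fun_apply sum_distrib_right sum.swap[of _ S])

lemma pairing_ind: "valid_comb n c \<Longrightarrow> pairing f n (ind c) = f c"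
proof -
  assume v: "valid_comb n c"
  have "pairing f n (ind c) = (\<Sum>d\<in>{c. valid_comb n c}. (if d = c then f c else 0))"
    unfolding pairing_def ind_def by (rule sum.cong) auto
  also have "\<dots> = f c" using v finite_valid_combs by (simp add: sum.delta')
  finally show ?thesis .
qed

lemma pairing_rel_span:
  assumes "\<And>r. r \<in> relations n \<Longrightarrow> pairing f n r = 0" "v \<in> rel_span n"
  shows "pairing f n v = 0"
proof -
  have "subspace_like": "vec.subspace {v. pairing f n v = 0}"
  proof (rule vec.subspaceI)
    show "0 \<in> {v. pairing f n v = 0}" by (simp add: pairing_def)
    show "x + y \<in> {v. pairing f n v = 0}" if "x \<in> {v. pairing f n v = 0}" "y \<in> {v. pairing f n v = 0}" for x y
      using that by (simp add: pairing_add)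
    show "sc c x \<in> {v. pairing f n v = 0}" if "x \<in> {v. pairing f n v = 0}" for c x
      using that by (simp add: pairing_sc)
  qed
  show ?thesis using vec.span_induct[of v "relations n" "\<lambda>v. pairing f n v = 0"] assms subspace_like by auto
qed


lemma valid_comb_fst_ksubsets: "valid_comb n (xs, ys) \<Longrightarrow> set xs \<in> ksubsets n n"
  unfolding subsets_of_card_def valid_comb_def ground_def by (auto simp: distinct_card)

lemma (in standard_tableau) dual_coeff_relations:
  assumes r: "r \<in> relations n"
  shows "pairing (dual_coeff n (tx, ty)) n r = 0"
proof -
  let ?f = "dual_coeff n (tx, ty)"
  from r consider
      (a) xs ys i j where "r = ind (swap_pos xs i j, ys) + ind (xs, ys)" "valid_comb n (xs, ys)" "i < j" "j < n"
    | (b) xs ys i j where "r = ind (xs, swap_pos ys i j) + ind (xs, ys)" "valid_comb n (xs, ys)" "i < j" "j < n - 1"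
    | (c) xs ys where "r = ind (xs, ys) - (\<Sum>i<n. sc ((-1) ^ (n - 1 - i)) (ind (ys @ [xs ! i], remove_nth i xs)))"
          "valid_comb n (xs, ys)"
    unfolding relations_def by blast
  then show ?thesis
  proof cases
    case a
    have len: "length xs = n" and d: "distinct xs" using a(2) by (auto simp: valid_comb_def)
    have v': "valid_comb n (swap_pos xs i j, ys)" using a len by (intro valid_comb_swap_fst) auto
    have "list_sign (swap_pos xs i j) = - list_sign xs" using a len d by (intro list_sign_swap_pos) auto
    moreover have "set (swap_pos xs i j) = set xs" using a len by (intro set_swap_pos) auto
    ultimately show ?thesis unfolding a(1) pairing_add pairing_ind[OF v'] pairing_ind[OF a(2)] dual_coeff_def by simp
  next
    case b
    have len: "length ys = n - 1" and d: "distinct ys" using b(2) by (auto simp: valid_comb_def)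
    have v': "valid_comb n (xs, swap_pos ys i j)" using b len by (intro valid_comb_swap_snd) auto
    have "list_sign (swap_pos ys i j) = - list_sign ys" using b len d by (intro list_sign_swap_pos) auto
    then show ?thesis unfolding b(1) pairing_add pairing_ind[OF v'] pairing_ind[OF b(2)] dual_coeff_def by simp
  next
    case c
    have v: "valid_comb n (xs, ys)" by (rule c(2))
    have len: "length xs = n" and d: "distinct xs" using v by (auto simp: valid_comb_def)
    define S where "S = list_sign xs * list_sign ys"
    have X: "set xs \<in> ksubsets n n" by (rule valid_comb_fst_ksubsets[OF v])
    have t: "(-1) ^ (n - 1 - i) * ?f (ys @ [xs ! i], remove_nth i xs) =
             S * ((-1) ^ Suc (xs ! i) * tableau_coeff n (tx, ty) (insert (xs ! i) (ground n - set xs)))" if i: "i < n" for i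
    proof -
      have "set (ys @ [xs ! i]) = insert (xs ! i) (ground n - set xs)" using valid_comb_set_snd[OF v] by simp
      then have "?f (ys @ [xs ! i], remove_nth i xs) =
          list_sign (ys @ [xs ! i]) * list_sign (remove_nth i xs) * tableau_coeff n (tx, ty) (insert (xs ! i) (ground n - set xs))"
        unfolding dual_coeff_def by simp
      then show ?thesis using jacobi_term_sign[OF v i n1] unfolding S_def
        by (simp add: mult.assoc[symmetric])
    qed
    have "pairing ?f n r = ?f (xs, ys) - (\<Sum>i<n. (-1) ^ (n - 1 - i) * ?f (ys @ [xs ! i], remove_nth i xs))"
      unfolding c(1) pairing_diff pairing_sum pairing_sc pairing_ind[OF v]
      using pairing_ind[OF valid_comb_jacobi_term[OF v _ n1]] by simp
    also have "(\<Sum>i<n. (-1) ^ (n - 1 - i) * ?f (ys @ [xs ! i], remove_nth i xs)) =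
        S * (\<Sum>i<n. (-1) ^ Suc (xs ! i) * tableau_coeff n (tx, ty) (insert (xs ! i) (ground n - set xs)))"
      unfolding sum_distrib_left
    proof (rule sum.cong[OF refl])
      fix i assume "i \<in> {..<n}"
      then have i: "i < n" by simp
      show "(-1) ^ (n - 1 - i) * ?f (ys @ [xs ! i], remove_nth i xs) =
             S * ((-1) ^ Suc (xs ! i) * tableau_coeff n (tx, ty) (insert (xs ! i) (ground n - set xs)))" by (rule t[OF i])
    qed
    also have "(\<Sum>i<n. (-1) ^ Suc (xs ! i) * tableau_coeff n (tx, ty) (insert (xs ! i) (ground n - set xs))) =
        (\<Sum>x\<in>set xs. (-1) ^ Suc x * tableau_coeff n (tx, ty) (insert x (ground n - set xs)))"
      using sum_nth_eq_sum_set[OF d, of "\<lambda>x. (-1) ^ Suc x * tableau_coeff n (tx, ty) (insert x (ground n - set xs))"] len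
      by simp
    also have "\<dots> = tableau_coeff n (tx, ty) (set xs)" using tableau_coeff_jacobi[OF X] by simp
    finally show ?thesis unfolding dual_coeff_def S_def by simp
  qed
qed


lemma (in standard_tableau) binary_key_less_transversal:
  assumes X: "X \<in> ksubsets n n" and tr: "transversal n (tx, ty) X" and ne: "X \<noteq> set tx"
  shows "binary_key (set tx) < binary_key X"
proof -
  have XA: "X \<subseteq> ground n" and fX: "finite X" and cX: "card X = n" using X by (auto simp: ksubsets_subset ksubsets_finite ksubsets_card)
  have tX: "t \<in> X" and trr: "\<And>r. r < n - 1 \<Longrightarrow> (tx ! r \<in> X) = (ty ! r \<notin> X)"
    using tr by (auto simp: transversal_iff)
  define R where "R = {r. r < n - 1 \<and> ty ! r \<in> X}"
  have fR: "finite R" unfolding R_def by simp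
  have e1: "X - set tx = (\<lambda>r. ty ! r) ` R"
  proof
    show "X - set tx \<subseteq> (\<lambda>r. ty ! r) ` R"
    proof
      fix x assume x: "x \<in> X - set tx"
      then have "x \<in> set ty" using XA set_tx_ty by auto
      then obtain r where r: "r < n - 1" "x = ty ! r" using lengths by (auto simp: in_set_conv_nth)
      then show "x \<in> (\<lambda>r. ty ! r) ` R" using x unfolding R_def by auto
    qed
    show "(\<lambda>r. ty ! r) ` R \<subseteq> X - set tx"
    proof
      fix x assume "x \<in> (\<lambda>r. ty ! r) ` R"
      then obtain r where r: "r < n - 1" "ty ! r \<in> X" "x = ty ! r" unfolding R_def by auto
      have "ty ! r \<notin> set tx"
      proof
        assume "ty ! r \<in> set tx"
        then obtain i where "i < n" "ty ! r = tx ! i" using lengths by (auto simp: in_set_conv_nth)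
        then show False using tx_neq_ty[of i r] r by simp
      qed
      then show "x \<in> X - set tx" using r by simp
    qed
  qed
  have e2: "set tx - X = (\<lambda>r. tx ! r) ` R"
  proof
    show "set tx - X \<subseteq> (\<lambda>r. tx ! r) ` R"
    proof
      fix x assume x: "x \<in> set tx - X"
      then obtain i where i: "i < n" "x = tx ! i" using lengths by (auto simp: in_set_conv_nth)
      have "i \<noteq> n - 1" using i x tX by auto
      then have i': "i < n - 1" using i by simp
      then have "ty ! i \<in> X" using trr[OF i'] x i by auto
      then show "x \<in> (\<lambda>r. tx ! r) ` R" using i i' unfolding R_def by auto
    qed
    show "(\<lambda>r. tx ! r) ` R \<subseteq> set tx - X"
    proof
      fix x assume "x \<in> (\<lambda>r. tx ! r) ` R"
      then obtain r where r: "r < n - 1" "ty ! r \<in> X" "x = tx ! r" unfolding R_def by auto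
      then have "tx ! r \<notin> X" using trr[OF r(1)] by simp
      then show "x \<in> set tx - X" using r lengths by auto
    qed
  qed
  have injty: "inj_on (\<lambda>r. ty ! r) R" by (rule inj_onI) (auto simp: R_def intro: ty_inj)
  have injtx: "inj_on (\<lambda>r. tx ! r) R" by (rule inj_onI) (auto simp: R_def intro: tx_inj)
  have Rne: "R \<noteq> {}"
  proof
    assume "R = {}"
    then have "X - set tx = {}" using e1 by simp
    then have "X \<subseteq> set tx" by auto
    moreover have "card (set tx) = n" using distinct_tx_ty lengths by (simp add: distinct_card)
    ultimately have "X = set tx" using cX card_subset_eq[of "set tx" X] by auto
    then show False using ne by simp
  qed
  show ?thesis
    by (rule binary_key_less_replace[OF fX finite_set fR Rne injtx injty e2 e1]) (simp add: R_def tx_less_ty)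
qed

lemma (in standard_tableau) transversal_self: "transversal n (tx, ty) (set tx)"
  unfolding transversal_iff
proof (intro conjI allI impI)
  show "t \<in> set tx" using lengths n1 by simp
  fix r assume r: "r < n - 1"
  have "tx ! r \<in> set tx" using r lengths by simp
  moreover have "ty ! r \<notin> set tx"
  proof
    assume "ty ! r \<in> set tx"
    then obtain i where "i < n" "ty ! r = tx ! i" using lengths by (auto simp: in_set_conv_nth)
    then show False using tx_neq_ty[of i r] r by simp
  qed
  ultimately show "(tx ! r \<in> set tx) = (ty ! r \<notin> set tx)" by simp
qed

lemma (in standard_tableau) tableau_coeff_self: "tableau_coeff n (tx, ty) (set tx) \<noteq> 0"
  unfolding tableau_coeff_def transversal_sign_def row_sign_def using transversal_self by simp

lemma (in standard_tableau) dual_coeff_self: "dual_coeff n (tx, ty) (tx, ty) \<noteq> 0"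
proof -
  have "sorted tx" "sorted ty" using std by (auto simp: standard_comb_def strict_sorted_iff)
  then have "list_sign tx = 1" "list_sign ty = 1" by (simp_all add: list_sign_def inversions_sorted)
  then show ?thesis unfolding dual_coeff_def using tableau_coeff_self by simp
qed

lemma standard_comb_eq_if_fst_set_eq:
  assumes "standard_comb n c" "standard_comb n d" "set (fst c) = set (fst d)"
  shows "c = d"
proof -
  have eq: "fst e = sorted_list_of_set (set (fst e)) \<and> snd e = sorted_list_of_set (ground n - set (fst e))" if "standard_comb n e" for e
  proof -
    have v: "valid_comb n e" using that by (simp add: standard_comb_def)
    have s: "sorted_wrt (<) (fst e)" "sorted_wrt (<) (snd e)" using that by (auto simp: standard_comb_def)
    have "fst e = sort (fst e)" "snd e = sort (snd e)" using s by (simp_all add: strict_sorted_iff sorted_sort_id)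
    moreover have "sort (fst e) = sorted_list_of_set (set (fst e))" "sort (snd e) = sorted_list_of_set (set (snd e))"
      using s by (simp_all add: strict_sorted_iff sort_eq_sorted_list_of_set)
    moreover have "set (snd e) = ground n - set (fst e)" using valid_comb_set_snd[of n "fst e" "snd e"] v by simp
    ultimately show ?thesis by simp
  qed
  show ?thesis using eq[OF assms(1)] eq[OF assms(2)] assms(3) by (metis prod.collapse)
qed

lemma finite_standard_combs: "finite {c. standard_comb n c}"
  by (rule finite_subset[OF _ finite_valid_combs[of n]]) (auto simp: standard_comb_def)

lemma (in standard_tableau) dual_coeff_eq_0_if_binary_key_le:
  assumes c: "standard_comb n c" "c \<noteq> (tx, ty)"
    and key: "binary_key (set (fst c)) \<le> binary_key (set tx)"
  shows "dual_coeff n (tx, ty) c = 0"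
proof (rule ccontr)
  assume "dual_coeff n (tx, ty) c \<noteq> 0"
  then have tr: "transversal n (tx, ty) (set (fst c))"
    unfolding dual_coeff_def tableau_coeff_def transversal_sign_def by (auto split: if_splits)
  have X: "set (fst c) \<in> ksubsets n n"
    using c(1) standard_comb_valid[of n c] valid_comb_fst_ksubsets[of n "fst c" "snd c"] by simp
  have "set (fst c) \<noteq> set tx" using standard_comb_eq_if_fst_set_eq[of n c "(tx, ty)"] c std by auto
  then show False using binary_key_less_transversal[OF X tr] key by simp
qed

lemma standard_independent_mod_relations:
  assumes n: "n \<ge> 1" and mem: "(\<Sum>c\<in>{c. standard_comb n c}. sc (a c) (ind c)) \<in> rel_span n"
  shows "\<forall>c. standard_comb n c \<longrightarrow> a c = 0"
proof (rule ccontr)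
  assume "\<not> (\<forall>c. standard_comb n c \<longrightarrow> a c = 0)"
  define A where "A = {c. standard_comb n c \<and> a c \<noteq> 0}"
  define key where "key c = binary_key (set (fst c))" for c :: comb
  have Ane: "A \<noteq> {}" using \<open>\<not> _\<close> unfolding A_def by auto
  have fA: "finite A" unfolding A_def by (rule finite_subset[OF _ finite_standard_combs]) auto
  define m where "m = Max (key ` A)"
  have "m \<in> key ` A" unfolding m_def using fA Ane by simp
  then obtain T where TA: "T \<in> A" and keyT: "key T = m" by auto
  have maxT: "key c \<le> key T" if "c \<in> A" for c using that fA keyT unfolding m_def by simp
  obtain tx ty where T: "T = (tx, ty)" by (cases T)
  have tab: "standard_tableau n tx ty" using TA n unfolding A_def T standard_tableau_def by simp
  have "0 = pairing (dual_coeff n T) n (\<Sum>c\<in>{c. standard_comb n c}. sc (a c) (ind c))"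
    unfolding T by (rule pairing_rel_span[OF standard_tableau.dual_coeff_relations[OF tab] mem, symmetric])
  also have "\<dots> = (\<Sum>c\<in>{c. standard_comb n c}. a c * dual_coeff n T c)"
    unfolding pairing_sum pairing_sc by (rule sum.cong) (auto simp: pairing_ind standard_comb_valid)
  also have "\<dots> = a T * dual_coeff n T T"
  proof -
    have zero: "a c * dual_coeff n T c = 0" if c: "c \<in> {c. standard_comb n c} - {T}" for c
    proof (cases "a c = 0")
      case False
      then have "key c \<le> key T" using c by (intro maxT) (simp add: A_def)
      then show ?thesis
        using standard_tableau.dual_coeff_eq_0_if_binary_key_le[OF tab, of c] c unfolding key_def T by simp
    qed simp
    have "(\<Sum>c\<in>{c. standard_comb n c} - {T}. a c * dual_coeff n T c) = 0"
      by (rule sum.neutral) (use zero in blast)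
    then show ?thesis
      using sum.remove[OF finite_standard_combs[of n], of T "\<lambda>c. a c * dual_coeff n T c"] TA unfolding A_def by simp
  qed
  finally have "a T * dual_coeff n T T = 0" ..
  moreover have "dual_coeff n T T \<noteq> 0" unfolding T by (rule standard_tableau.dual_coeff_self[OF tab])
  ultimately show False using TA unfolding A_def by simp
qed




lemma ind_inj: "inj ind"
  by (rule injI) (metis ind_def zero_neq_one)

lemma finite_combs_space: "finite (combs_space n)"
  unfolding combs_space_def using finite_valid_combs by simp

lemma card_standard_brackets: "card (standard_brackets n) = card {c. standard_comb n c}"
  unfolding standard_brackets_def by (rule card_image) (rule inj_on_subset[OF ind_inj], simp)

lemma independent_union_standard_brackets:
  assumes n: "n \<ge> 1" and B: "B \<subseteq> rel_span n" "vec.independent B" "finite B"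
  shows "vec.independent (B \<union> standard_brackets n)" and "B \<inter> standard_brackets n = {}"
proof -
  let ?St = "standard_brackets n"
  have fSt: "finite ?St" unfolding standard_brackets_def using finite_standard_combs by simp
  have std_coeffs_zero: "\<forall>v\<in>?St. c v = 0" if "(\<Sum>v\<in>?St. sc (c v) v) \<in> rel_span n" for c
  proof -
    have "(\<Sum>v\<in>?St. sc (c v) v) = (\<Sum>d\<in>{c. standard_comb n c}. sc (c (ind d)) (ind d))"
      unfolding standard_brackets_def
      using sum.reindex[OF inj_on_subset[OF ind_inj, of "{c. standard_comb n c}"], of "\<lambda>v. sc (c v) v"] by simp
    then show ?thesis using standard_independent_mod_relations[OF n, of "c \<circ> ind"] that
      unfolding standard_brackets_def by auto
  qed
  show disj: "B \<inter> ?St = {}"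
  proof -
    have "ind d \<notin> B" if "standard_comb n d" for d
    proof
      assume "ind d \<in> B"
      have "(\<Sum>v\<in>?St. sc (if v = ind d then 1 else 0) v) = (\<Sum>v\<in>?St. if v = ind d then ind d else 0)"
        by (rule sum.cong) (auto simp: fun_eq_iff)
      also have "\<dots> = ind d" using fSt that by (simp add: sum.delta' standard_brackets_def)
      finally have "(\<Sum>v\<in>?St. sc (if v = ind d then 1 else 0) v) \<in> rel_span n"
        using \<open>ind d \<in> B\<close> B(1) by auto
      then have "\<forall>v\<in>?St. (if v = ind d then (1::complex) else 0) = 0" by (rule std_coeffs_zero)
      moreover have "ind d \<in> ?St" using that unfolding standard_brackets_def by blast
      ultimately have "(if ind d = ind d then (1::complex) else 0) = 0" by blast
      then show False by simp
    qed
    then show ?thesis unfolding standard_brackets_def by auto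
  qed
  show "vec.independent (B \<union> ?St)"
  proof (rule vec.independent_if_scalars_zero)
    show "finite (B \<union> ?St)" using B(3) fSt by simp
    fix c v assume sum0: "(\<Sum>v\<in>B \<union> ?St. sc (c v) v) = 0" and v: "v \<in> B \<union> ?St"
    have split: "(\<Sum>v\<in>B \<union> ?St. sc (c v) v) = (\<Sum>v\<in>B. sc (c v) v) + (\<Sum>v\<in>?St. sc (c v) v)"
      by (rule sum.union_disjoint[OF B(3) fSt disj])
    have "(\<Sum>v\<in>B. sc (c v) v) \<in> rel_span n"
      using B(1) by (intro vec.span_sum vec.span_scale) auto
    moreover have "(\<Sum>v\<in>?St. sc (c v) v) = - (\<Sum>v\<in>B. sc (c v) v)"
      using sum0 split by (simp add: eq_neg_iff_add_eq_0 add.commute)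
    ultimately have "(\<Sum>v\<in>?St. sc (c v) v) \<in> rel_span n" using vec.span_neg by simp
    then have cSt: "\<forall>v\<in>?St. c v = 0" by (rule std_coeffs_zero)
    then have "(\<Sum>v\<in>B. sc (c v) v) = 0" using sum0 split by (simp add: fun_eq_iff sum_fun_apply)
    then have "\<forall>v\<in>B. c v = 0" using vec.independentD[OF B(2,3) subset_refl] by blast
    then show "c v = 0" using cSt v by auto
  qed
qed

lemma rho_dim_eq_card_standard:
  assumes n: "n \<ge> 1"
  shows "rho_dim n = card {c. standard_comb n c}"
proof -
  obtain B where B: "B \<subseteq> relations n" "vec.independent B" "relations n \<subseteq> vec.span B"
    and cB: "card B = vec.dim (relations n)"
    using vec.basis_exists by blast
  have "B \<subseteq> vec.span (combs_space n)" using B(1) relations_subset_span_combs[OF n] by auto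
  then have fB: "finite B" using vec.independent_span_bound[OF finite_combs_space B(2)] by simp
  have BR: "B \<subseteq> rel_span n" using B(1) vec.span_superset by blast
  have "vec.span (B \<union> standard_brackets n) = vec.span (standard_brackets n \<union> relations n)"
    unfolding vec.span_eq using B(1,3) vec.span_mono[of B "B \<union> standard_brackets n"]
    by (auto intro: vec.span_base)
  then have "vec.dim (combs_space n) = vec.dim (B \<union> standard_brackets n)"
    using standard_span_eq_span_combs[OF n] by (metis vec.dim_span)
  also have "\<dots> = card B + card (standard_brackets n)"
    using independent_union_standard_brackets[OF n BR B(2) fB] fB finite_standard_combs
    by (simp add: vec.dim_eq_card_independent card_Un_disjoint standard_brackets_def)
  finally show ?thesis unfolding rho_dim_def cB card_standard_brackets by simp
qed

section \<open>Standard Young tableaux of shape 2^(n-1) 1\<close>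

definition shape :: "nat \<Rightarrow> nat list" where "shape n = replicate (n - 1) 2 @ [1]"

lemma shape_length: "n \<ge> 1 \<Longrightarrow> length (shape n) = n" by (simp add: shape_def)

lemma shape_nth: "n \<ge> 1 \<Longrightarrow> r < n \<Longrightarrow> shape n ! r = (if r < n - 1 then 2 else 1)"
  by (auto simp: shape_def nth_append)

lemma shape_sum: "n \<ge> 1 \<Longrightarrow> sum_list (shape n) = 2 * n - 1"
  by (simp add: shape_def sum_list_replicate)

lemma young_cells_shape: "n \<ge> 1 \<Longrightarrow> (r, c) \<in> young_cells (shape n) \<longleftrightarrow> (c = 0 \<and> r < n) \<or> (c = 1 \<and> r < n - 1)"
  unfolding young_cells_def using shape_nth[of n r] shape_length[of n] by (auto split: if_splits)

definition tableau_of_comb :: "nat \<Rightarrow> comb \<Rightarrow> (nat \<times> nat \<Rightarrow> nat)" where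
  "tableau_of_comb n c = (\<lambda>(r, k). if k = 0 \<and> r < n then fst c ! r else if k = 1 \<and> r < n - 1 then snd c ! r else 0)"

definition comb_of_tableau :: "nat \<Rightarrow> (nat \<times> nat \<Rightarrow> nat) \<Rightarrow> comb" where
  "comb_of_tableau n T = (map (\<lambda>r. T (r, 0)) [0..<n], map (\<lambda>r. T (r, 1)) [0..<n - 1])"

lemma tableau_of_comb_image:
  assumes n: "n \<ge> 1" and len: "length xs = n" "length ys = n - 1"
  shows "tableau_of_comb n (xs, ys) ` young_cells (shape n) = set xs \<union> set ys"
proof
  show "tableau_of_comb n (xs, ys) ` young_cells (shape n) \<subseteq> set xs \<union> set ys"
  proof
    fix v assume "v \<in> tableau_of_comb n (xs, ys) ` young_cells (shape n)"
    then obtain r k where rk: "(r, k) \<in> young_cells (shape n)" "v = tableau_of_comb n (xs, ys) (r, k)" by auto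
    then show "v \<in> set xs \<union> set ys" using young_cells_shape[OF n, of r k] len by (auto simp: tableau_of_comb_def)
  qed
  show "set xs \<union> set ys \<subseteq> tableau_of_comb n (xs, ys) ` young_cells (shape n)"
  proof
    fix v assume "v \<in> set xs \<union> set ys"
    then consider (a) r where "r < n" "v = xs ! r" | (b) r where "r < n - 1" "v = ys ! r"
      using len by (auto simp: in_set_conv_nth)
    then show "v \<in> tableau_of_comb n (xs, ys) ` young_cells (shape n)"
    proof cases
      case a
      then have "(r, 0) \<in> young_cells (shape n)" "v = tableau_of_comb n (xs, ys) (r, 0)" using young_cells_shape[OF n] by (auto simp: tableau_of_comb_def)
      then show ?thesis by blast
    next
      case b
      then have "(r, 1) \<in> young_cells (shape n)" "v = tableau_of_comb n (xs, ys) (r, 1)" using young_cells_shape[OF n] by (auto simp: tableau_of_comb_def)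
      then show ?thesis by blast
    qed
  qed
qed

lemma inj_on_tableau_of_comb:
  assumes n: "n \<ge> 1" and len: "length xs = n" "length ys = n - 1" and d: "distinct (xs @ ys)"
  shows "inj_on (tableau_of_comb n (xs, ys)) (young_cells (shape n))"
proof (rule inj_onI)
  fix p q assume p: "p \<in> young_cells (shape n)" and q: "q \<in> young_cells (shape n)"
    and e: "tableau_of_comb n (xs, ys) p = tableau_of_comb n (xs, ys) q"
  obtain r k where pp: "p = (r, k)" by (cases p)
  obtain r' k' where qq: "q = (r', k')" by (cases q)
  have dx: "distinct xs" "distinct ys" "set xs \<inter> set ys = {}" using d by auto
  have c1: "(k = 0 \<and> r < n) \<or> (k = 1 \<and> r < n - 1)" using p pp young_cells_shape[OF n] by auto
  have c2: "(k' = 0 \<and> r' < n) \<or> (k' = 1 \<and> r' < n - 1)" using q qq young_cells_shape[OF n] by auto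
  have xy: "xs ! i \<noteq> ys ! j" if "i < n" "j < n - 1" for i j
  proof
    assume "xs ! i = ys ! j"
    moreover have "xs ! i \<in> set xs" "ys ! j \<in> set ys" using that len by auto
    ultimately show False using dx(3) by auto
  qed
  show "p = q"
    using c1 c2 e dx len xy unfolding pp qq tableau_of_comb_def
    by (auto simp: nth_eq_iff_index_eq) (metis xy)+
qed

lemma tableau_of_comb_SYT:
  assumes n: "n \<ge> 1" and s: "standard_comb n (xs, ys)"
  shows "tableau_of_comb n (xs, ys) \<in> SYT (shape n)"
proof -
  have v: "length xs = n" "length ys = n - 1" "distinct (xs @ ys)" "set (xs @ ys) = {1..2*n-1}"
    using s by (auto simp: standard_comb_def valid_comb_def)
  have sx: "sorted_wrt (<) xs" "sorted_wrt (<) ys" and row: "\<forall>j<n - 1. xs ! j < ys ! j"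
    using s by (auto simp: standard_comb_def)
  have bij: "bij_betw (tableau_of_comb n (xs, ys)) (young_cells (shape n)) {1..sum_list (shape n)}"
    unfolding bij_betw_def using inj_on_tableau_of_comb[OF n v(1,2,3)] tableau_of_comb_image[OF n v(1,2)] v(4) shape_sum[OF n] by simp
  have zero: "\<forall>x. x \<notin> young_cells (shape n) \<longrightarrow> tableau_of_comb n (xs, ys) x = 0"
    using young_cells_shape[OF n] by (auto simp: tableau_of_comb_def)
  have rowc: "\<forall>r c. (r, c) \<in> young_cells (shape n) \<and> (r, Suc c) \<in> young_cells (shape n) \<longrightarrow>
      tableau_of_comb n (xs, ys) (r, c) < tableau_of_comb n (xs, ys) (r, Suc c)"
    using young_cells_shape[OF n] row by (auto simp: tableau_of_comb_def)
  have colc: "\<forall>r c. (r, c) \<in> young_cells (shape n) \<and> (Suc r, c) \<in> young_cells (shape n) \<longrightarrow>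
      tableau_of_comb n (xs, ys) (r, c) < tableau_of_comb n (xs, ys) (Suc r, c)"
  proof (intro allI impI)
    fix r c assume a: "(r, c) \<in> young_cells (shape n) \<and> (Suc r, c) \<in> young_cells (shape n)"
    then have "(c = 0 \<and> Suc r < n) \<or> (c = 1 \<and> Suc r < n - 1)" using young_cells_shape[OF n] by auto
    then show "tableau_of_comb n (xs, ys) (r, c) < tableau_of_comb n (xs, ys) (Suc r, c)"
    proof
      assume "c = 0 \<and> Suc r < n"
      then show ?thesis using sorted_wrt_nth_less[OF sx(1), of r "Suc r"] v by (auto simp: tableau_of_comb_def)
    next
      assume "c = 1 \<and> Suc r < n - 1"
      then show ?thesis using sorted_wrt_nth_less[OF sx(2), of r "Suc r"] v by (auto simp: tableau_of_comb_def)
    qed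
  qed
  show ?thesis unfolding SYT_def using bij zero rowc colc by blast
qed


lemma tableau_of_comb_of_tableau:
  assumes n: "n \<ge> 1" and T: "T \<in> SYT (shape n)"
  shows "tableau_of_comb n (comb_of_tableau n T) = T"
proof
  fix p :: "nat \<times> nat"
  obtain r k where p: "p = (r, k)" by (cases p)
  have zero: "T p = 0" if "p \<notin> young_cells (shape n)" using T that unfolding SYT_def by blast
  show "tableau_of_comb n (comb_of_tableau n T) p = T p"
    using young_cells_shape[OF n, of r k] zero p
    by (cases "p \<in> young_cells (shape n)") (auto simp: tableau_of_comb_def comb_of_tableau_def)
qed

lemma standard_comb_of_tableau:
  assumes n: "n \<ge> 1" and T: "T \<in> SYT (shape n)"
  shows "standard_comb n (comb_of_tableau n T)"
proof -
  obtain xs ys where h: "comb_of_tableau n T = (xs, ys)" by (cases "comb_of_tableau n T")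
  have len: "length xs = n" "length ys = n - 1" using h unfolding comb_of_tableau_def by auto
  have xsn: "xs ! r = T (r, 0)" if "r < n" for r using that h unfolding comb_of_tableau_def by auto
  have ysn: "ys ! r = T (r, 1)" if "r < n - 1" for r using that h unfolding comb_of_tableau_def by auto
  have c0: "(r, 0) \<in> young_cells (shape n)" if "r < n" for r using young_cells_shape[OF n] that by simp
  have c1: "(r, 1) \<in> young_cells (shape n)" if "r < n - 1" for r using young_cells_shape[OF n] that by simp
  have row: "\<And>r c. (r, c) \<in> young_cells (shape n) \<Longrightarrow> (r, Suc c) \<in> young_cells (shape n) \<Longrightarrow> T (r, c) < T (r, Suc c)"
    and col: "\<And>r c. (r, c) \<in> young_cells (shape n) \<Longrightarrow> (Suc r, c) \<in> young_cells (shape n) \<Longrightarrow> T (r, c) < T (Suc r, c)"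
    using T unfolding SYT_def by auto
  have "T ` young_cells (shape n) = {1..2*n-1}" using T shape_sum[OF n] unfolding SYT_def bij_betw_def by auto
  then have st: "set (xs @ ys) = {1..2*n-1}"
    using tableau_of_comb_image[OF n len] tableau_of_comb_of_tableau[OF n T] h by simp
  then have dist_xy: "distinct (xs @ ys)" using len n by (intro card_distinct) simp
  have "sorted_wrt (<) xs" unfolding sorted_wrt_iff_nth_Suc_transp[OF transp_on_less]
    using col[OF c0 c0] len xsn by simp
  moreover have "sorted_wrt (<) ys" unfolding sorted_wrt_iff_nth_Suc_transp[OF transp_on_less]
    using col[OF c1 c1] len ysn by simp
  moreover have "\<forall>j<n - 1. xs ! j < ys ! j" using row[OF c0 c1[unfolded One_nat_def]] xsn ysn by simp
  ultimately show ?thesis unfolding h standard_comb_def valid_comb_def using len dist_xy st by simp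
qed

lemma inj_on_tableau_of_comb_standard: "inj_on (tableau_of_comb n) {c. standard_comb n c}"
proof (rule inj_onI)
  fix c d assume c: "c \<in> {c. standard_comb n c}" and d: "d \<in> {c. standard_comb n c}"
    and e: "tableau_of_comb n c = tableau_of_comb n d"
  obtain xs ys where cc: "c = (xs, ys)" by (cases c)
  obtain xs' ys' where dd: "d = (xs', ys')" by (cases d)
  have len: "length xs = n" "length ys = n - 1" "length xs' = n" "length ys' = n - 1"
    using c d cc dd by (auto simp: standard_comb_def valid_comb_def)
  have "xs ! r = xs' ! r" if "r < n" for r using fun_cong[OF e, of "(r, 0)"] that cc dd by (simp add: tableau_of_comb_def)
  then have "xs = xs'" using len by (simp add: list_eq_iff_nth_eq)
  moreover have "ys ! r = ys' ! r" if "r < n - 1" for r using fun_cong[OF e, of "(r, 1)"] that cc dd by (simp add: tableau_of_comb_def)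
  then have "ys = ys'" using len by (simp add: list_eq_iff_nth_eq)
  ultimately show "c = d" using cc dd by simp
qed

lemma card_standard_eq_card_SYT:
  assumes n: "n \<ge> 1"
  shows "card {c. standard_comb n c} = card (SYT (replicate (n - 1) 2 @ [1]))"
proof -
  have "tableau_of_comb n ` {c. standard_comb n c} = SYT (shape n)"
  proof
    show "tableau_of_comb n ` {c. standard_comb n c} \<subseteq> SYT (shape n)"
      using tableau_of_comb_SYT[OF n] by auto
    show "SYT (shape n) \<subseteq> tableau_of_comb n ` {c. standard_comb n c}"
      using standard_comb_of_tableau[OF n] tableau_of_comb_of_tableau[OF n] by (metis image_eqI mem_Collect_eq subsetI)
  qed
  then have "bij_betw (tableau_of_comb n) {c. standard_comb n c} (SYT (shape n))"
    using inj_on_tableau_of_comb_standard by (simp add: bij_betw_def)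
  then show ?thesis unfolding shape_def by (rule bij_betw_same_card)
qed


theorem mainTheorem9:
  fixes n :: nat
  assumes "n \<ge> 2"
  shows "module.span sc (ind ` {c. standard_comb n c} \<union> relations n) = module.span sc (combs_space n)
       \<and> (\<forall>a :: comb \<Rightarrow> complex.
            (\<Sum>c\<in>{c. standard_comb n c}. sc (a c) (ind c)) \<in> module.span sc (relations n)
            \<longrightarrow> (\<forall>c. standard_comb n c \<longrightarrow> a c = 0))
       \<and> rho_dim n = card (SYT (replicate (n - 1) 2 @ [1]))"
proof -
  have n: "n \<ge> 1" using assms by simp
  have 1: "module.span sc (ind ` {c. standard_comb n c} \<union> relations n) = module.span sc (combs_space n)"
    using standard_span_eq_span_combs[OF n] unfolding standard_brackets_def .
  have 2: "\<forall>a :: comb \<Rightarrow> complex.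
            (\<Sum>c\<in>{c. standard_comb n c}. sc (a c) (ind c)) \<in> module.span sc (relations n)
            \<longrightarrow> (\<forall>c. standard_comb n c \<longrightarrow> a c = 0)"
    using standard_independent_mod_relations[OF n] by blast
  have 3: "rho_dim n = card (SYT (replicate (n - 1) 2 @ [1]))"
    using rho_dim_eq_card_standard[OF n] card_standard_eq_card_SYT[OF n] by simp
  show ?thesis using 1 2 3 by blast
qed

end
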